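(* Suppose Assumptions 1–4 hold, the algorithm below is run with $\tau_1$ as specified, and let $\delta\in(0,1)$. On the event $\mathcal{E}=\mathcal{E}_w\cap\mathcal{E}_{\tilde w}\cap\mathcal{E}_\Theta\cap\mathcal{E}_z$ defined below, for every $i\in[n_e]$ and $j\in[p]$ it holds that $\|\hat\Theta_{\mathcal{G}_j}(i)-\Theta_{\mathcal{G}_j}\|\le\sqrt{\varepsilon_0^2/i}$, where $\Theta_{\mathcal{G}_j}=[A\ B_{\mathcal{G}_j}]$.
   Context: Setting. In each round $t\in[T]$ the system evolves for $k=0,\dots,N-1$ as $x^{(t)}_{k+1}=Ax^{(t)}_k+B_{\mathcal{S}_t}u^{(t)}_{k,\mathcal{S}_t}+w^{(t)}_k$, $x^{(t)}_0=0$, with unknown $A\in\mathbb{R}^{n\times n}$, $B=[B_1\ \cdots\ B_q]\in\mathbb{R}^{n\times m}$, $B_i\in\mathbb{R}^{n\times m_i}$, actuators $\mathcal{G}=\{1,\dots,q\}$, $B_{\mathcal{S}}$ the columns for $\mathcal{S}$, $m_{\mathcal{S}}=\sum_{i\in\mathcal{S}}m_i$, $H\ge1$ actuators per round. Cost matrices $Q^{(t)},Q_f^{(t)}\in\mathbb{S}^n_+$, $R^{(t)}\in\mathbb{S}^m_{++}$, $R^{(t)}_{\mathcal{S}}$ the principal submatrix for $\mathcal{S}$. Riccati recursion: $P^{(t)}_{N,\mathcal{S}}=Q_f^{(t)}$, $K^{(t)}_{k,\mathcal{S}}=-(B_{\mathcal{S}}^\top P^{(t)}_{k+1,\mathcal{S}}B_{\mathcal{S}}+R^{(t)}_{\mathcal{S}})^{-1}B_{\mathcal{S}}^\top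 P^{(t)}_{k+1,\mathcal{S}}A$, $P^{(t)}_{k,\mathcal{S}}=Q^{(t)}+A^\top P^{(t)}_{k+1,\mathcal{S}}(A+B_{\mathcal{S}}K^{(t)}_{k,\mathcal{S}})$; $\hat K$ the same with $(A,B_{\mathcal{S}})$ replaced by estimates. $\Psi^{(t)}_{k_2,k_1}(\mathcal{S})=(A+B_{\mathcal{S}}K^{(t)}_{k_2-1,\mathcal{S}})\cdots(A+B_{\mathcal{S}}K^{(t)}_{k_1,\mathcal{S}})$ ($I$ if $k_2=k_1$). $\Gamma^{(t)}_{k,\mathcal{S}}=\max\{\|A\|,\|B\|,\|P^{(t)}_{k,\mathcal{S}}\|,\|K^{(t)}_{k-1,\mathcal{S}}\|\}$, $\Gamma_{\mathcal{S}}=\max_{t,k\in[N]}\Gamma^{(t)}_{k,\mathcal{S}}$, $\tilde\Gamma_{\mathcal{S}}=1+\Gamma_{\mathcal{S}}$, $\sigma_Q=\max\{\max_t\sigma_1(Q^{(t)}),\max_t\sigma_1(Q_f^{(t)})\}$, $\sigma_R=\max_t\sigma_1(R^{(t)})$, $\vartheta=\max\{\|A\|,\|B\|\}$; for $|\mathcal{S}|=H$, $\zeta_{\mathcal{S}}\ge1,\eta_{\mathcal{S}}\in(0,1)$ satisfy $\|\Psi^{(t)}_{k_2,k_1}(\mathcal{S})\|\le\zeta_{\mathcal{S}}\eta_{\mathcal{S}}^{k_2-k_1}$ for all $t$, $k_1\le k_2$; $\mu_{\mathcal{S}}=32\ell^{5/2}\beta^{2(\ell-1)}(1+\nu^{-1})\tilde\Gamma_{\mathcal{S}}^3\max\{\sigma_Q,\sigma_R\}$,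 $\varepsilon_0=\min_{|\mathcal{S}|=H}\frac{1-\eta_{\mathcal{S}}}{6\|B_{\mathcal{S}}\|\zeta_{\mathcal{S}}}\tilde\Gamma_{\mathcal{S}}^{-3}(20\tilde\Gamma_{\mathcal{S}}^9\sigma_R)^{1-\ell}\mu_{\mathcal{S}}^{-1}$ with $\beta=\max\{1,\varepsilon_0+\|A\|\}$. Assumptions: (1) $Q_f^{(t)}\succ0$, $\sigma_n(Q^{(t)})\ge1$, $\sigma_m(R^{(t)})\ge1$ for all $t$. (2) There are $\ell\in\{1,\dots,n-1\}$, $\nu>0$ with $\sigma_n([B_{\mathcal{S}}\ AB_{\mathcal{S}}\ \cdots\ A^{\ell-1}B_{\mathcal{S}}])\ge\nu$ for all $|\mathcal{S}|=H$. (3) The $w^{(t)}_k$ are independent across $k,t$, each $\mathcal{N}(0,\sigma^2I_n)$. (4) Partition $\mathcal{G}=\bigcup_{j=1}^p\mathcal{G}_j$, $|\mathcal{G}_j|\le H$, with known $K_{\mathcal{G}_j}$ satisfying $\|(A+B_{\mathcal{G}_j}K_{\mathcal{G}_j})^k\|\le\zeta_0\eta_0^k$ for all $k\ge0$, $\zeta_0\ge1$, $\eta_0\in(0,1)$; $\kappa=\max\{\max_j\|K_{\mathcal{G}_j}\|,1\}$. Algorithm (with $\lambda>0$): $\tau_1=\lceil160n(\frac{\lambda\vartheta^2n}{\sigma^2}+2(n+m)\log(\frac{8n}{\delta}(p+\frac{NTz_b}{\lambda})))/((N-1)\varepsilon_0^2)\rceil$ with $z_b=\frac{20\zeta_0^2(1+\kappa)^2\sigma^2}{(1-\eta_0)^2}(2(\vartheta^2+1)\kappa^2m+n)\log\frac{8NT}{\delta}$;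 $n_e=\lceil\sqrt T/(\tau_1p)\rceil$, $\tau_2=(T-n_e\tau_1p)/n_e$ (assumed integer), $T_{1,1}=1$, $T_{i,j+1}=T_{i,j}+\tau_1$, $T_{i+1,1}=T_{i,p+1}+\tau_2$. In epoch $i$, for $j\in[p]$ and $t\in\{T_{i,j},\dots,T_{i,j+1}-1\}$: $\mathcal{S}_t=\mathcal{G}_j$, $u^{(t)}_{k,\mathcal{G}_j}=K_{\mathcal{G}_j}x^{(t)}_k+\tilde w^{(t)}_k$ with $\tilde w^{(t)}_k$ i.i.d. $\mathcal{N}(0,2\sigma^2\kappa^2I)$; then $\hat\Theta_{\mathcal{G}_j}(i)\in\arg\min_Y\{\lambda\|Y\|_F^2+\sum_{l=1}^i\sum_{t=T_{l,j}}^{T_{l,j+1}-1}\sum_{k=0}^{N-1}\|x^{(t)}_{k+1}-Yz^{(t)}_{k,\mathcal{G}_j}\|^2\}$ with $z^{(t)}_{k,\mathcal{G}_j}=[x^{(t)\top}_k\ u^{(t)\top}_{k,\mathcal{G}_j}]^\top$; in the remaining rounds of the epoch, $\mathcal{S}_t$ is chosen by Exp3.S and $u^{(t)}_{k,\mathcal{S}_t}=\hat K^{(t)}_{k,\mathcal{S}_t}x^{(t)}_k$ from the current estimates. Events: with $\tilde{\mathcal{T}}$ the set of estimation rounds $\{t:T_{i,j}\le t\le T_{i,j+1}-1\}$, $\Delta_{\mathcal{G}_j}(i)=\Theta_{\mathcal{G}_j}-\hat\Theta_{\mathcal{G}_j}(i)$, $V_{\mathcal{G}_j}(i)=\lambda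 I+\sum_{l=1}^i\sum_{t=T_{l,j}}^{T_{l,j+1}-1}\sum_{k=0}^{N-1}z^{(t)}_{k,\mathcal{G}_j}z^{(t)\top}_{k,\mathcal{G}_j}$: $\mathcal{E}_w=\{\|w^{(t)}_k\|\le\sigma\sqrt{5n\log(8NT/\delta)}\ \forall t,k\}$; $\mathcal{E}_{\tilde w}=\{\|\tilde w^{(t)}_k\|\le\kappa\sigma\sqrt{10m\log(8NT/\delta)}\ \forall t\in\tilde{\mathcal{T}},k\}$; $\mathcal{E}_\Theta=\{\mathrm{Tr}(\Delta_{\mathcal{G}_j}(i)^\top V_{\mathcal{G}_j}(i)\Delta_{\mathcal{G}_j}(i))\le4\sigma^2n\log\frac{8np\det V_{\mathcal{G}_j}(i)}{\delta\det(\lambda I)}+2\lambda\|\Theta_{\mathcal{G}_j}\|_F^2\ \forall i,j\}$; $\mathcal{E}_z=\{V_{\mathcal{G}_j}(i)-\lambda I\succeq\frac{(N-1)\tau_1i\sigma^2}{80}I\ \forall i,j\}$. *)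

theory Defs
  imports "Jordan_Normal_Form.Matrix" "Jordan_Normal_Form.Determinant"
    "Jordan_Normal_Form.DL_Submatrix" "Jordan_Normal_Form.Gauss_Jordan_Elimination"
    "HOL.Transcendental"
begin

definition vnorm :: "real vec \<Rightarrow> real" where
  "vnorm v = sqrt (v \<bullet> v)"

definition opnorm :: "real mat \<Rightarrow> real" where
  "opnorm M = Sup {vnorm (M *\<^sub>v x) | x. x \<in> carrier_vec (dim_col M) \<and> vnorm x \<le> 1}"

definition fro :: "real mat \<Rightarrow> real" where
  "fro M = sqrt (\<Sum>i<dim_row M. \<Sum>j<dim_col M. (M $$ (i,j))\<^sup>2)"

definition mtrace :: "real mat \<Rightarrow> real" where
  "mtrace M = (\<Sum>i<dim_row M. M $$ (i,i))"

text \<open>Smallest singular value sigma_d of a d x c matrix (d = number of rows):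
  the minimum of |M^T x| over unit vectors x (this is zero when c < d).\<close>
definition svmin :: "real mat \<Rightarrow> real" where
  "svmin M = Inf {vnorm (transpose_mat M *\<^sub>v x) | x. x \<in> carrier_vec (dim_row M) \<and> vnorm x = 1}"

definition psd :: "nat \<Rightarrow> real mat \<Rightarrow> bool" where
  "psd d M \<longleftrightarrow> M \<in> carrier_mat d d \<and> transpose_mat M = M \<and>
     (\<forall>x \<in> carrier_vec d. x \<bullet> (M *\<^sub>v x) \<ge> 0)"

definition pd :: "nat \<Rightarrow> real mat \<Rightarrow> bool" where
  "pd d M \<longleftrightarrow> M \<in> carrier_mat d d \<and> transpose_mat M = M \<and>
     (\<forall>x \<in> carrier_vec d. x \<noteq> 0\<^sub>v d \<longrightarrow> x \<bullet> (M *\<^sub>v x) > 0)"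

definition loewner_ge :: "nat \<Rightarrow> real mat \<Rightarrow> real mat \<Rightarrow> bool" where
  "loewner_ge d M N \<longleftrightarrow> M \<in> carrier_mat d d \<and> N \<in> carrier_mat d d \<and>
     (\<forall>x \<in> carrier_vec d. x \<bullet> ((M - N) *\<^sub>v x) \<ge> 0)"

definition minv :: "real mat \<Rightarrow> real mat" where
  "minv M = the (mat_inverse M)"

definition hcat :: "real mat \<Rightarrow> real mat \<Rightarrow> real mat" where
  "hcat A B = mat (dim_row A) (dim_col A + dim_col B)
     (\<lambda>(i,j). if j < dim_col A then A $$ (i,j) else B $$ (i, j - dim_col A))"

fun ctrb :: "real mat \<Rightarrow> real mat \<Rightarrow> nat \<Rightarrow> real mat" where
  "ctrb A B 0 = 0\<^sub>m (dim_row B) 0"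
| "ctrb A B (Suc l) = hcat (ctrb A B l) ((A ^\<^sub>m l) * B)"

text \<open>Actuator i (1 \<le> i \<le> q) owns the m_i consecutive columns starting at offset
  m_1 + ... + m_(i-1) (0-based) of B = [B_1 ... B_q].\<close>
definition act_off :: "(nat \<Rightarrow> nat) \<Rightarrow> nat \<Rightarrow> nat" where
  "act_off mi i = (\<Sum>k\<in>{1..<i}. mi k)"

definition act_cols :: "(nat \<Rightarrow> nat) \<Rightarrow> nat set \<Rightarrow> nat set" where
  "act_cols mi S = {c. \<exists>i\<in>S. act_off mi i \<le> c \<and> c < act_off mi i + mi i}"

definition mS :: "(nat \<Rightarrow> nat) \<Rightarrow> nat set \<Rightarrow> nat" where
  "mS mi S = (\<Sum>i\<in>S. mi i)"

definition BS :: "(nat \<Rightarrow> nat) \<Rightarrow> real mat \<Rightarrow> nat set \<Rightarrow> real mat" where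
  "BS mi B S = submatrix B UNIV (act_cols mi S)"

definition RS :: "(nat \<Rightarrow> nat) \<Rightarrow> real mat \<Rightarrow> nat set \<Rightarrow> real mat" where
  "RS mi R S = submatrix R (act_cols mi S) (act_cols mi S)"

definition Kgain :: "real mat \<Rightarrow> real mat \<Rightarrow> real mat \<Rightarrow> real mat \<Rightarrow> real mat" where
  "Kgain A B R P = - (minv (transpose_mat B * P * B + R) * transpose_mat B * P * A)"

text \<open>riccP A B Q Qf R r = P_(N-r): the Riccati matrix with r steps to go.\<close>
fun riccP :: "real mat \<Rightarrow> real mat \<Rightarrow> real mat \<Rightarrow> real mat \<Rightarrow> real mat \<Rightarrow> nat \<Rightarrow> real mat" where
  "riccP A B Q Qf R 0 = Qf"
| "riccP A B Q Qf R (Suc r) =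
     (let P = riccP A B Q Qf R r in Q + transpose_mat A * P * (A + B * Kgain A B R P))"

definition Pk :: "(nat \<Rightarrow> nat) \<Rightarrow> real mat \<Rightarrow> real mat \<Rightarrow> nat set \<Rightarrow> real mat \<Rightarrow> real mat \<Rightarrow> real mat
    \<Rightarrow> nat \<Rightarrow> nat \<Rightarrow> real mat" where
  "Pk mi A B S Q Qf R N k = riccP A (BS mi B S) Q Qf (RS mi R S) (N - k)"

definition Kk :: "(nat \<Rightarrow> nat) \<Rightarrow> real mat \<Rightarrow> real mat \<Rightarrow> nat set \<Rightarrow> real mat \<Rightarrow> real mat \<Rightarrow> real mat
    \<Rightarrow> nat \<Rightarrow> nat \<Rightarrow> real mat" where
  "Kk mi A B S Q Qf R N k = Kgain A (BS mi B S) (RS mi R S) (Pk mi A B S Q Qf R N (Suc k))"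

text \<open>psi d F k1 k2 = F (k2-1) * ... * F k1  (identity if k2 \<le> k1).\<close>
fun psi :: "nat \<Rightarrow> (nat \<Rightarrow> real mat) \<Rightarrow> nat \<Rightarrow> nat \<Rightarrow> real mat" where
  "psi d F k1 0 = 1\<^sub>m d"
| "psi d F k1 (Suc k) = (if Suc k \<le> k1 then 1\<^sub>m d else F k * psi d F k1 k)"

definition GammaS :: "(nat \<Rightarrow> nat) \<Rightarrow> real mat \<Rightarrow> real mat \<Rightarrow> (nat \<Rightarrow> real mat) \<Rightarrow> (nat \<Rightarrow> real mat)
    \<Rightarrow> (nat \<Rightarrow> real mat) \<Rightarrow> nat \<Rightarrow> nat \<Rightarrow> nat set \<Rightarrow> real" where
  "GammaS mi A B Q Qf R N T S = Max {max (max (opnorm A) (opnorm B))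
        (max (opnorm (Pk mi A B S (Q t) (Qf t) (R t) N k))
             (opnorm (Kk mi A B S (Q t) (Qf t) (R t) N (k - 1)))) | t k. t \<in> {1..T} \<and> k \<in> {1..N}}"

end

(* On the event E, the regularised Gram matrix V of the regressors z = [x; u] collected while
   actuator group G_j is excited satisfies V >= (lambda + c) I with c = (N-1) tau1 i sigma^2 / 80
   (event E_z).  Hence the confidence bound E_Theta gives
     c * |Theta_hat - Theta|^2 <= 4 sigma^2 n log (8 n p det V / (delta lambda^d)) + 2 lambda |Theta|_F^2.
   During excitation the closed loop A + B K is (zeta0, eta0)-stable and the noises are bounded
   (events E_w, E_wt), so every regressor has squared norm at most z_b.  Bounding the quadratic form
   of V and peeling off Schur complements gives det V <= (lambda + N T z_b / p)^d, so the log term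
   is at most (n + m) log (8 n / delta (p + N T z_b / lambda)), while |Theta|_F^2 <= 2 n vartheta^2.
   The choice of tau1 is exactly what turns this into |Theta_hat - Theta|^2 <= eps0^2 / i. *)

theory Submission
  imports Defs
begin

section \<open>Euclidean, operator and Frobenius norms\<close>

lemma scalar_prod_self_eq_sum: "(v :: real vec) \<bullet> v = (\<Sum>i<dim_vec v. (v $ i)\<^sup>2)"
  unfolding scalar_prod_def by (simp add: power2_eq_square atLeast0LessThan)

lemma scalar_prod_self_nonneg: "0 \<le> (v :: real vec) \<bullet> v"
  unfolding scalar_prod_self_eq_sum by (simp add: sum_nonneg)

lemma vnorm_nonneg: "0 \<le> vnorm v"
  unfolding vnorm_def by (simp add: scalar_prod_self_nonneg)

lemma vnorm_power2: "(vnorm v)\<^sup>2 = v \<bullet> v"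
  unfolding vnorm_def by (simp add: scalar_prod_self_nonneg)

lemma vnorm_zero_vec [simp]: "vnorm (0\<^sub>v n) = 0"
  by (simp add: vnorm_def scalar_prod_self_eq_sum)

lemma sum_product_power2_le:
  fixes a b :: "'i \<Rightarrow> real"
  shows "(\<Sum>i\<in>I. a i * b i)\<^sup>2 \<le> (\<Sum>i\<in>I. (a i)\<^sup>2) * (\<Sum>i\<in>I. (b i)\<^sup>2)"
    (is "?ab\<^sup>2 \<le> ?aa * ?bb")
proof (cases "?bb = 0")
  case True
  then have "finite I \<Longrightarrow> \<forall>i\<in>I. b i = 0"
    by (simp add: sum_nonneg_eq_0_iff)
  then show ?thesis by (cases "finite I") simp_all
next
  case False
  then have bb: "0 < ?bb" by (simp add: less_le sum_nonneg)
  define t where "t = ?ab / ?bb"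
  have "0 \<le> (\<Sum>i\<in>I. (a i - t * b i)\<^sup>2)"
    by (simp add: sum_nonneg)
  also have "\<dots> = ?aa - 2 * t * ?ab + t\<^sup>2 * ?bb"
    by (simp add: power2_diff power_mult_distrib sum_subtractf sum.distrib sum_distrib_left
        algebra_simps)
  also have "\<dots> = ?aa - ?ab\<^sup>2 / ?bb"
    using bb by (simp add: t_def power2_eq_square field_simps)
  finally show ?thesis using bb by (simp add: field_simps)
qed

lemma scalar_prod_power2_le:
  fixes u v :: "real vec"
  assumes "dim_vec u = dim_vec v"
  shows "(u \<bullet> v)\<^sup>2 \<le> (u \<bullet> u) * (v \<bullet> v)"
  using sum_product_power2_le[of "\<lambda>i. u $ i" "\<lambda>i. v $ i" "{..<dim_vec v}"] assms
  unfolding scalar_prod_self_eq_sum unfolding scalar_prod_def by (simp add: atLeast0LessThan)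

lemma abs_scalar_prod_le_vnorm:
  assumes "dim_vec u = dim_vec v"
  shows "\<bar>u \<bullet> v\<bar> \<le> vnorm u * vnorm v"
proof (rule power2_le_imp_le)
  show "\<bar>u \<bullet> v\<bar>\<^sup>2 \<le> (vnorm u * vnorm v)\<^sup>2"
    using scalar_prod_power2_le[OF assms] by (simp add: power_mult_distrib vnorm_power2)
qed (simp add: vnorm_nonneg)

lemma vnorm_add_le:
  assumes "u \<in> carrier_vec n" "v \<in> carrier_vec n"
  shows "vnorm (u + v) \<le> vnorm u + vnorm v"
proof (rule power2_le_imp_le)
  have "(vnorm (u + v))\<^sup>2 = u \<bullet> u + 2 * (u \<bullet> v) + v \<bullet> v"
    using assms by (simp add: vnorm_power2 add_scalar_prod_distrib[of _ n]
        scalar_prod_add_distrib[of _ n] comm_scalar_prod[of v n u])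
  also have "\<dots> \<le> (vnorm u + vnorm v)\<^sup>2"
    using abs_scalar_prod_le_vnorm[of u v] assms by (simp add: power2_sum vnorm_power2)
  finally show "(vnorm (u + v))\<^sup>2 \<le> (vnorm u + vnorm v)\<^sup>2" .
qed (simp add: vnorm_nonneg add_nonneg_nonneg)

lemma vnorm_smult: "vnorm (c \<cdot>\<^sub>v v) = \<bar>c\<bar> * vnorm v"
  by (simp add: vnorm_def scalar_prod_self_eq_sum power_mult_distrib
      flip: sum_distrib_left add: real_sqrt_mult)

lemma vnorm_append_power2:
  "(vnorm (x @\<^sub>v u))\<^sup>2 = (vnorm x)\<^sup>2 + (vnorm u)\<^sup>2"
  by (simp add: vnorm_power2 scalar_prod_append[of x "dim_vec x" u "dim_vec u"])

lemma abs_index_le_vnorm: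
  assumes "i < dim_vec v"
  shows "\<bar>v $ i\<bar> \<le> vnorm v"
proof -
  have "(v $ i)\<^sup>2 \<le> (\<Sum>j<dim_vec v. (v $ j)\<^sup>2)"
    using assms by (intro member_le_sum) auto
  then show ?thesis
    unfolding vnorm_def scalar_prod_self_eq_sum by (simp add: real_le_rsqrt)
qed

lemma fro_power2: "(fro M)\<^sup>2 = (\<Sum>i<dim_row M. \<Sum>j<dim_col M. (M $$ (i, j))\<^sup>2)"
  unfolding fro_def by (simp add: sum_nonneg)

lemma fro_nonneg: "0 \<le> fro M"
  unfolding fro_def by (simp add: sum_nonneg)

lemma fro_power2_eq_sum_rows: "(fro M)\<^sup>2 = (\<Sum>i<dim_row M. (vnorm (row M i))\<^sup>2)"
  unfolding fro_power2 vnorm_power2 scalar_prod_self_eq_sum by simp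

lemma dim_hcat [simp]:
  "dim_row (hcat A C) = dim_row A" "dim_col (hcat A C) = dim_col A + dim_col C"
  by (simp_all add: hcat_def)

lemma row_hcat:
  assumes "i < dim_row A" "dim_row C = dim_row A"
  shows "row (hcat A C) i = row A i @\<^sub>v row C i"
  using assms by (intro eq_vecI) (auto simp: hcat_def)

lemma fro_hcat:
  assumes "dim_row C = dim_row A"
  shows "(fro (hcat A C))\<^sup>2 = (fro A)\<^sup>2 + (fro C)\<^sup>2"
  using assms by (simp add: fro_power2_eq_sum_rows row_hcat vnorm_append_power2 sum.distrib)

lemma fro_minus_commute:
  assumes "M \<in> carrier_mat r c" "N \<in> carrier_mat r c"
  shows "fro (M - N) = fro (N - M)"
  using assms unfolding fro_def by (simp add: power2_commute)

lemma vnorm_mult_mat_vec_le_fro: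
  assumes x: "x \<in> carrier_vec (dim_col M)"
  shows "vnorm (M *\<^sub>v x) \<le> fro M * vnorm x"
proof (rule power2_le_imp_le)
  have "(vnorm (M *\<^sub>v x))\<^sup>2 = (\<Sum>i<dim_row M. (row M i \<bullet> x)\<^sup>2)"
    by (simp add: vnorm_power2 scalar_prod_self_eq_sum)
  also have "\<dots> \<le> (\<Sum>i<dim_row M. (vnorm (row M i))\<^sup>2 * (vnorm x)\<^sup>2)"
    using x by (intro sum_mono) (simp add: vnorm_power2 scalar_prod_power2_le)
  also have "\<dots> = (fro M * vnorm x)\<^sup>2"
    by (simp add: fro_power2_eq_sum_rows sum_distrib_right power_mult_distrib)
  finally show "(vnorm (M *\<^sub>v x))\<^sup>2 \<le> (fro M * vnorm x)\<^sup>2" .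
qed (simp add: fro_nonneg vnorm_nonneg)

lemma bdd_above_opnorm_set:
  "bdd_above {vnorm (M *\<^sub>v x) | x. x \<in> carrier_vec (dim_col M) \<and> vnorm x \<le> 1}"
proof (rule bdd_aboveI)
  fix y assume "y \<in> {vnorm (M *\<^sub>v x) | x. x \<in> carrier_vec (dim_col M) \<and> vnorm x \<le> 1}"
  then obtain x where "x \<in> carrier_vec (dim_col M)" "vnorm x \<le> 1" "y = vnorm (M *\<^sub>v x)"
    by blast
  then show "y \<le> fro M"
    using vnorm_mult_mat_vec_le_fro[of x M] fro_nonneg[of M] mult_left_le[of "vnorm x" "fro M"]
    by (simp add: vnorm_nonneg)
qed

lemma opnorm_ge:
  "x \<in> carrier_vec (dim_col M) \<Longrightarrow> vnorm x \<le> 1 \<Longrightarrow> vnorm (M *\<^sub>v x) \<le> opnorm M"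
  unfolding opnorm_def by (rule cSup_upper[OF _ bdd_above_opnorm_set]) auto

lemma opnorm_nonneg: "0 \<le> opnorm M"
  using opnorm_ge[of "0\<^sub>v (dim_col M)" M] by (simp add: vnorm_def scalar_prod_self_eq_sum)

lemma opnorm_le:
  assumes "\<And>x. x \<in> carrier_vec (dim_col M) \<Longrightarrow> vnorm x \<le> 1 \<Longrightarrow> vnorm (M *\<^sub>v x) \<le> K"
  shows "opnorm M \<le> K"
  unfolding opnorm_def using assms
  by (intro cSup_least) (auto intro!: exI[of _ "0\<^sub>v (dim_col M)"])

lemma vnorm_mult_mat_vec_le:
  assumes x: "x \<in> carrier_vec (dim_col M)"
  shows "vnorm (M *\<^sub>v x) \<le> opnorm M * vnorm x"
proof (cases "vnorm x = 0")
  case True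
  then show ?thesis
    using vnorm_mult_mat_vec_le_fro[OF x] vnorm_nonneg[of "M *\<^sub>v x"] by simp
next
  case False
  then have pos: "0 < vnorm x" using vnorm_nonneg[of x] by simp
  define y where "y = (1 / vnorm x) \<cdot>\<^sub>v x"
  have "M *\<^sub>v y = (1 / vnorm x) \<cdot>\<^sub>v (M *\<^sub>v x)"
    unfolding y_def using x by (intro mult_mat_vec[of M "dim_row M" "dim_col M"]) auto
  then have "vnorm (M *\<^sub>v x) / vnorm x = vnorm (M *\<^sub>v y)"
    using pos by (simp add: vnorm_smult)
  also have "\<dots> \<le> opnorm M"
    using x pos by (intro opnorm_ge) (simp_all add: y_def vnorm_smult)
  finally show ?thesis using pos by (simp add: divide_le_eq mult.commute)
qed

lemma vnorm_row_le_opnorm: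
  assumes i: "i < dim_row M"
  shows "vnorm (row M i) \<le> opnorm M"
proof -
  have "vnorm (row M i) * vnorm (row M i) = (M *\<^sub>v row M i) $ i"
    using i by (simp add: vnorm_power2 flip: power2_eq_square)
  also have "\<dots> \<le> vnorm (M *\<^sub>v row M i)"
    using abs_index_le_vnorm[of i "M *\<^sub>v row M i"] i by simp
  also have "\<dots> \<le> opnorm M * vnorm (row M i)"
    by (rule vnorm_mult_mat_vec_le) simp
  finally show ?thesis
    using vnorm_nonneg[of "row M i"] opnorm_nonneg[of M]
    by (metis less_eq_real_def mult_le_cancel_right mult_zero_left order_trans)
qed

lemma fro_power2_le_opnorm: "(fro M)\<^sup>2 \<le> dim_row M * (opnorm M)\<^sup>2"
proof -
  have "(fro M)\<^sup>2 \<le> (\<Sum>i<dim_row M. (opnorm M)\<^sup>2)"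
    unfolding fro_power2_eq_sum_rows
    by (intro sum_mono power_mono) (simp_all add: vnorm_row_le_opnorm vnorm_nonneg)
  then show ?thesis by simp
qed

lemma opnorm_le_fro: "opnorm M \<le> fro M"
  by (rule opnorm_le) (metis fro_nonneg mult_left_le vnorm_mult_mat_vec_le_fro order_trans)

section \<open>Determinants via Schur complements\<close>

lemma quadratic_form_eq_sum:
  assumes "V \<in> carrier_mat d d" "x \<in> carrier_vec d"
  shows "x \<bullet> (V *\<^sub>v x) = (\<Sum>a<d. \<Sum>b<d. x $ a * V $$ (a, b) * x $ b)"
  using assms by (simp add: scalar_prod_def atLeast0LessThan sum_distrib_left mult.assoc)

lemma symmetric_index:
  assumes "V \<in> carrier_mat d d" "transpose_mat V = V" "i < d" "j < d"
  shows "V $$ (i, j) = V $$ (j, i)"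
  using assms by (metis carrier_matD index_transpose_mat(1))

definition schur_complement :: "real mat \<Rightarrow> real mat" where
  "schur_complement V = mat (dim_row V - 1) (dim_col V - 1)
     (\<lambda>(i, j). V $$ (Suc i, Suc j) - V $$ (Suc i, 0) * V $$ (0, Suc j) / V $$ (0, 0))"

lemma schur_complement_carrier:
  "V \<in> carrier_mat (Suc d) (Suc d) \<Longrightarrow> schur_complement V \<in> carrier_mat d d"
  by (simp add: schur_complement_def)

lemma schur_complement_index:
  "V \<in> carrier_mat (Suc d) (Suc d) \<Longrightarrow> i < d \<Longrightarrow> j < d \<Longrightarrow>
    schur_complement V $$ (i, j) = V $$ (Suc i, Suc j) - V $$ (Suc i, 0) * V $$ (0, Suc j) / V $$ (0, 0)"
  by (simp add: schur_complement_def)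

lemma det_schur_complement:
  assumes V: "V \<in> carrier_mat (Suc d) (Suc d)" and a: "V $$ (0, 0) \<noteq> 0"
  shows "det V = V $$ (0, 0) * det (schur_complement V)"
proof -
  let ?a = "V $$ (0, 0)"
  \<comment> \<open>clear the first column below the pivot by a unit lower triangular matrix\<close>
  define E where "E = mat (Suc d) (Suc d)
    (\<lambda>(i, j). if i = j then 1 else if j = 0 then - V $$ (i, 0) / ?a else 0)"
  define W where "W = E * V"
  have E: "E \<in> carrier_mat (Suc d) (Suc d)" by (simp add: E_def)
  have W: "W \<in> carrier_mat (Suc d) (Suc d)" using E V by (simp add: W_def)
  have "det E = 1"
    by (subst det_lower_triangular[OF _ E]) (auto simp: E_def prod_list_diag_prod)
  then have "det V = det W" using det_mult[OF E V] by (simp add: W_def)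
  have W_index: "W $$ (i, j) =
      (if i = 0 then V $$ (0, j) else V $$ (i, j) - V $$ (i, 0) * V $$ (0, j) / ?a)"
    if "i < Suc d" "j < Suc d" for i j
  proof -
    have "W $$ (i, j) = (\<Sum>k<Suc d. E $$ (i, k) * V $$ (k, j))"
      using E V that by (simp add: W_def scalar_prod_def atLeast0LessThan)
    also have "\<dots> = (\<Sum>k<Suc d. (if k = i then V $$ (i, j) else 0)
        + (if k = 0 \<and> i \<noteq> 0 then - V $$ (i, 0) / ?a * V $$ (0, j) else 0))"
      using that by (intro sum.cong) (auto simp: E_def)
    finally show ?thesis using that by (simp add: sum.distrib)
  qed
  have "det W = (\<Sum>i<Suc d. W $$ (i, 0) * cofactor W i 0)"
    by (rule laplace_expansion_column[OF W]) simp
  also have "\<dots> = W $$ (0, 0) * cofactor W 0 0 + (\<Sum>i<d. W $$ (Suc i, 0) * cofactor W (Suc i) 0)"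
    by (rule sum.lessThan_Suc_shift)
  also have "(\<Sum>i<d. W $$ (Suc i, 0) * cofactor W (Suc i) 0) = 0"
    using a by (simp add: W_index)
  finally have "det W = W $$ (0, 0) * cofactor W 0 0" by simp
  moreover have "mat_delete W 0 0 = schur_complement V"
    using W V by (intro eq_matI) (auto simp: mat_delete_def W_index schur_complement_def)
  ultimately show ?thesis
    using \<open>det V = det W\<close> by (simp add: cofactor_def W_index)
qed

lemma quadratic_form_vCons:
  assumes V: "V \<in> carrier_mat (Suc d) (Suc d)" and sym: "transpose_mat V = V"
    and a: "V $$ (0, 0) \<noteq> 0" and y: "y \<in> carrier_vec d"
  defines "c \<equiv> \<Sum>j<d. V $$ (0, Suc j) * y $ j"
  shows "vCons t y \<bullet> (V *\<^sub>v vCons t y)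
    = V $$ (0, 0) * (t + c / V $$ (0, 0))\<^sup>2 + y \<bullet> (schur_complement V *\<^sub>v y)"
proof -
  let ?a = "V $$ (0, 0)"
  have Vsym: "V $$ (Suc i, 0) = V $$ (0, Suc i)" if "i < d" for i
    using symmetric_index[OF V sym] that by simp
  define Q where "Q = (\<Sum>i<d. \<Sum>j<d. y $ i * V $$ (Suc i, Suc j) * y $ j)"
  have "vCons t y \<bullet> (V *\<^sub>v vCons t y)
      = t * ?a * t + (\<Sum>j<d. t * V $$ (0, Suc j) * y $ j) + (\<Sum>i<d. y $ i * V $$ (Suc i, 0) * t) + Q"
  proof -
    have "vCons t y \<bullet> (V *\<^sub>v vCons t y)
        = (\<Sum>a<Suc d. \<Sum>b<Suc d. vCons t y $ a * V $$ (a, b) * vCons t y $ b)"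
      using V y by (intro quadratic_form_eq_sum) auto
    then show ?thesis
      by (simp only: sum.lessThan_Suc_shift) (simp add: sum.distrib Q_def)
  qed
  also have "\<dots> = ?a * t\<^sup>2 + 2 * t * c + Q"
    using Vsym by (simp add: c_def sum_distrib_left power2_eq_square ac_simps)
  also have "\<dots> = ?a * (t + c / ?a)\<^sup>2 + (Q - c * c / ?a)"
    using a by (simp add: power2_eq_square field_simps)
  also have "Q - c * c / ?a = y \<bullet> (schur_complement V *\<^sub>v y)"
    using V y Vsym
    by (simp add: quadratic_form_eq_sum[OF schur_complement_carrier[OF V] y] schur_complement_index
        Q_def c_def right_diff_distrib left_diff_distrib sum_subtractf sum_divide_distrib sum_product
        ac_simps)
  finally show ?thesis .
qed

lemma transpose_schur_complement:
  assumes V: "V \<in> carrier_mat (Suc d) (Suc d)" and sym: "transpose_mat V = V"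
  shows "transpose_mat (schur_complement V) = schur_complement V"
  using V symmetric_index[OF V sym]
  by (intro eq_matI) (auto simp: schur_complement_def mult.commute)

lemma schur_complement_rayleigh_bounds:
  assumes V: "V \<in> carrier_mat (Suc d) (Suc d)" and sym: "transpose_mat V = V"
    and a: "0 < V $$ (0, 0)" and l: "0 \<le> l"
    and lower: "\<forall>x\<in>carrier_vec (Suc d). l * (x \<bullet> x) \<le> x \<bullet> (V *\<^sub>v x)"
    and upper: "\<forall>x\<in>carrier_vec (Suc d). x \<bullet> (V *\<^sub>v x) \<le> M * (x \<bullet> x)"
    and y: "y \<in> carrier_vec d"
  shows "l * (y \<bullet> y) \<le> y \<bullet> (schur_complement V *\<^sub>v y)"
    and "y \<bullet> (schur_complement V *\<^sub>v y) \<le> M * (y \<bullet> y)"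
proof -
  let ?a = "V $$ (0, 0)"
  define c where "c = (\<Sum>j<d. V $$ (0, Suc j) * y $ j)"
  have form: "vCons t y \<bullet> (V *\<^sub>v vCons t y) = ?a * (t + c / ?a)\<^sup>2 + y \<bullet> (schur_complement V *\<^sub>v y)"
    for t using quadratic_form_vCons[OF V sym _ y] a by (simp add: c_def)
  have "l * (y \<bullet> y) \<le> l * (vCons (- c / ?a) y \<bullet> vCons (- c / ?a) y)"
    using l by (intro mult_left_mono) auto
  also have "\<dots> \<le> vCons (- c / ?a) y \<bullet> (V *\<^sub>v vCons (- c / ?a) y)"
    by (rule lower[rule_format]) (use y in simp)
  finally show "l * (y \<bullet> y) \<le> y \<bullet> (schur_complement V *\<^sub>v y)"
    unfolding form by simp
  have "y \<bullet> (schur_complement V *\<^sub>v y) \<le> vCons 0 y \<bullet> (V *\<^sub>v vCons 0 y)"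
    unfolding form using a by simp
  also have "\<dots> \<le> M * (vCons 0 y \<bullet> vCons 0 y)"
    by (rule upper[rule_format]) (use y in simp)
  finally show "y \<bullet> (schur_complement V *\<^sub>v y) \<le> M * (y \<bullet> y)" by simp
qed

lemma det_rayleigh_bounds:
  fixes V :: "real mat"
  assumes "V \<in> carrier_mat d d" "transpose_mat V = V" "0 < l"
    "\<forall>x\<in>carrier_vec d. l * (x \<bullet> x) \<le> x \<bullet> (V *\<^sub>v x)"
    "\<forall>x\<in>carrier_vec d. x \<bullet> (V *\<^sub>v x) \<le> M * (x \<bullet> x)"
  shows "l ^ d \<le> det V \<and> det V \<le> M ^ d"
  using assms
proof (induction d arbitrary: V)
  case 0
  then have "det V = 1"
    by (subst det_lower_triangular[of 0]) (auto simp: prod_list_diag_prod)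
  then show ?case by simp
next
  case (Suc d)
  let ?a = "V $$ (0, 0)"
  let ?e = "unit_vec (Suc d) 0 :: real vec"
  have "l * (?e \<bullet> ?e) \<le> ?e \<bullet> (V *\<^sub>v ?e)" "?e \<bullet> (V *\<^sub>v ?e) \<le> M * (?e \<bullet> ?e)"
    using Suc.prems(4,5) unit_vec_carrier[of "Suc d" 0] by blast+
  then have la: "l \<le> ?a" and aM: "?a \<le> M"
    using Suc.prems(1) by auto
  with Suc.prems(3) have a: "0 < ?a" by simp
  note bounds = schur_complement_rayleigh_bounds[OF Suc.prems(1,2) a _ Suc.prems(4,5)]
  have "l ^ d \<le> det (schur_complement V) \<and> det (schur_complement V) \<le> M ^ d"
    using Suc.prems(1-3) bounds
    by (intro Suc.IH schur_complement_carrier transpose_schur_complement) auto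
  moreover have "det V = ?a * det (schur_complement V)"
    using Suc.prems(1) a by (intro det_schur_complement) auto
  moreover have "0 \<le> l ^ d" using Suc.prems(3) by simp
  ultimately show ?case
    using la aM a by (auto intro!: mult_mono)
qed

section \<open>Column submatrices and actuator blocks\<close>

lemma bij_betw_pick:
  assumes "finite J"
  shows "bij_betw (pick J) {..<card J} J"
proof (rule bij_betwI')
  show "pick J x = pick J y \<longleftrightarrow> x = y" if "x \<in> {..<card J}" "y \<in> {..<card J}" for x y
    using that by (metis lessThan_iff nat_neq_iff pick_mono less_irrefl)
  show "pick J x \<in> J" if "x \<in> {..<card J}" for x
    using that by (simp add: pick_in_set)
  fix c assume c: "c \<in> J"
  have "{a \<in> J. a < c} \<subset> J" using c by auto
  then have "card {a \<in> J. a < c} < card J" using assms by (simp add: psubset_card_mono)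
  then show "\<exists>x\<in>{..<card J}. c = pick J x"
    using pick_card_in_set[OF c] by force
qed

(* Entry k of y is placed at the k-th smallest element of J, the rest is zero. *)
definition spread_vec :: "nat set \<Rightarrow> nat \<Rightarrow> real vec \<Rightarrow> real vec" where
  "spread_vec J n y = vec n (\<lambda>c. if c \<in> J then y $ card {a \<in> J. a < c} else 0)"

lemma spread_vec_carrier [simp]: "spread_vec J n y \<in> carrier_vec n"
  by (simp add: spread_vec_def)

lemma dim_spread_vec [simp]: "dim_vec (spread_vec J n y) = n"
  by (simp add: spread_vec_def)

lemma sum_mult_spread_vec:
  assumes J: "J \<subseteq> {..<n}"
  shows "(\<Sum>c<n. f c * spread_vec J n y $ c) = (\<Sum>i<card J. f (pick J i) * y $ i)"
proof -
  have fin: "finite J" using J finite_subset by blast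
  have "(\<Sum>c<n. f c * spread_vec J n y $ c)
      = (\<Sum>c<n. if c \<in> J then f c * y $ card {a \<in> J. a < c} else 0)"
    by (intro sum.cong) (simp_all add: spread_vec_def)
  also have "\<dots> = (\<Sum>c\<in>J. f c * y $ card {a \<in> J. a < c})"
    using sum.inter_restrict[of "{..<n}" "\<lambda>c. f c * y $ card {a \<in> J. a < c}" J] J
    by (simp add: Int_absorb1)
  also have "\<dots> = (\<Sum>i<card J. f (pick J i) * y $ card {a \<in> J. a < pick J i})"
    by (rule sum.reindex_bij_betw[OF bij_betw_pick[OF fin], symmetric])
  also have "\<dots> = (\<Sum>i<card J. f (pick J i) * y $ i)"
    by (intro sum.cong) (simp_all add: card_pick)
  finally show ?thesis .
qed

lemma vnorm_spread_vec:
  assumes J: "J \<subseteq> {..<n}" and y: "y \<in> carrier_vec (card J)"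
  shows "vnorm (spread_vec J n y) = vnorm y"
proof -
  let ?s = "spread_vec J n y"
  have "(\<Sum>c<n. ?s $ c * ?s $ c) = (\<Sum>i<card J. ?s $ pick J i * y $ i)"
    by (rule sum_mult_spread_vec[OF J])
  also have "\<dots> = (\<Sum>i<card J. y $ i * y $ i)"
  proof (intro sum.cong refl)
    fix i assume "i \<in> {..<card J}"
    then have "pick J i \<in> J" "card {a \<in> J. a < pick J i} = i"
      by (simp_all add: pick_in_set card_pick)
    with J show "?s $ pick J i * y $ i = y $ i * y $ i"
      by (auto simp: spread_vec_def)
  qed
  finally show ?thesis
    using y by (simp add: vnorm_def scalar_prod_self_eq_sum power2_eq_square)
qed

lemma submatrix_cols_carrier:
  assumes "B \<in> carrier_mat n m" "J \<subseteq> {..<m}"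
  shows "submatrix B UNIV J \<in> carrier_mat n (card J)"
proof -
  have "{j. j < dim_col B \<and> j \<in> J} = J" using assms by auto
  then have "dim_col (submatrix B UNIV J) = card J" by (simp only: dim_submatrix)
  moreover have "dim_row (submatrix B UNIV J) = n" using assms(1) by (simp add: dim_submatrix)
  ultimately show ?thesis by (rule carrier_matI[rotated])
qed

lemma submatrix_cols_mult_vec:
  assumes J: "J \<subseteq> {..<dim_col B}" and y: "y \<in> carrier_vec (card J)"
  shows "submatrix B UNIV J *\<^sub>v y = B *\<^sub>v spread_vec J (dim_col B) y"
proof -
  have cols: "{j. j < dim_col B \<and> j \<in> J} = J" using J by auto
  show ?thesis
  proof (rule eq_vecI)
    fix r assume "r < dim_vec (B *\<^sub>v spread_vec J (dim_col B) y)"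
    then have r: "r < dim_row B" by simp
    have "(submatrix B UNIV J *\<^sub>v y) $ r = (\<Sum>i<card J. B $$ (r, pick J i) * y $ i)"
      using r y cols
      by (auto simp: scalar_prod_def atLeast0LessThan submatrix_index dim_submatrix pick_UNIV
          intro!: sum.cong)
    also have "\<dots> = (B *\<^sub>v spread_vec J (dim_col B) y) $ r"
      using r J by (simp add: scalar_prod_def atLeast0LessThan sum_mult_spread_vec)
    finally show "(submatrix B UNIV J *\<^sub>v y) $ r = (B *\<^sub>v spread_vec J (dim_col B) y) $ r" .
  qed (simp add: dim_submatrix)
qed

lemma opnorm_submatrix_cols_le:
  assumes J: "J \<subseteq> {..<dim_col B}"
  shows "opnorm (submatrix B UNIV J) \<le> opnorm B"
proof (rule opnorm_le)
  have dim: "dim_col (submatrix B UNIV J) = card J"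
    using submatrix_cols_carrier[of B "dim_row B" "dim_col B" J] J by simp
  fix y assume "y \<in> carrier_vec (dim_col (submatrix B UNIV J))" and y1: "vnorm y \<le> 1"
  then have y: "y \<in> carrier_vec (card J)" by (simp add: dim)
  show "vnorm (submatrix B UNIV J *\<^sub>v y) \<le> opnorm B"
    unfolding submatrix_cols_mult_vec[OF J y]
    by (rule opnorm_ge) (simp_all add: vnorm_spread_vec[OF J y] y1)
qed

lemma act_off_add_le:
  assumes "1 \<le> i" "{1..<Suc i} \<subseteq> K" "finite K"
  shows "act_off mi i + mi i \<le> sum mi K"
proof -
  have "act_off mi i + mi i = (\<Sum>k\<in>{1..<Suc i}. mi k)"
    using assms(1) by (simp add: act_off_def add.commute)
  also have "\<dots> \<le> sum mi K"
    using assms(2,3) by (intro sum_mono2) auto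
  finally show ?thesis .
qed

lemma act_cols_subset:
  assumes "S \<subseteq> {1..q}"
  shows "act_cols mi S \<subseteq> {..<(\<Sum>i\<in>{1..q}. mi i)}"
proof
  fix c assume "c \<in> act_cols mi S"
  then obtain i where i: "i \<in> S" "c < act_off mi i + mi i"
    unfolding act_cols_def by auto
  have "act_off mi i + mi i \<le> (\<Sum>k\<in>{1..q}. mi k)"
    using i assms by (intro act_off_add_le) auto
  with i show "c \<in> {..<(\<Sum>i\<in>{1..q}. mi i)}" by simp
qed

lemma card_act_cols:
  assumes S: "S \<subseteq> {1..q}"
  shows "card (act_cols mi S) = mS mi S"
proof -
  have before: "act_off mi a + mi a \<le> act_off mi b" if "a \<in> S" "a < b" for a b
    using that S unfolding act_off_def[of mi b] by (intro act_off_add_le) auto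
  have disjoint: "{act_off mi a..<act_off mi a + mi a} \<inter> {act_off mi b..<act_off mi b + mi b} = {}"
    if "a \<in> S" "b \<in> S" "a \<noteq> b" for a b
  proof (cases "a < b")
    case True
    then show ?thesis using before[OF that(1) True] by auto
  next
    case False
    then have "b < a" using that(3) by simp
    then show ?thesis using before[OF that(2) \<open>b < a\<close>] by auto
  qed
  have "act_cols mi S = (\<Union>i\<in>S. {act_off mi i..<act_off mi i + mi i})"
    unfolding act_cols_def by auto
  moreover have "finite S" using S finite_subset by blast
  ultimately show ?thesis
    unfolding mS_def using disjoint by (simp add: card_UN_disjoint)
qed

lemma BS_carrier:
  assumes "B \<in> carrier_mat n (\<Sum>i\<in>{1..q}. mi i)" "S \<subseteq> {1..q}"
  shows "BS mi B S \<in> carrier_mat n (mS mi S)"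
  unfolding BS_def card_act_cols[OF assms(2), symmetric]
  using act_cols_subset[OF assms(2)] by (rule submatrix_cols_carrier[OF assms(1)])

lemma opnorm_BS_le:
  assumes "B \<in> carrier_mat n (\<Sum>i\<in>{1..q}. mi i)" "S \<subseteq> {1..q}"
  shows "opnorm (BS mi B S) \<le> opnorm B"
  unfolding BS_def using act_cols_subset[OF assms(2)] assms(1)
  by (intro opnorm_submatrix_cols_le) auto

section \<open>Stable linear recursions\<close>

(* Bounding M^h x_k for all h at once lets the induction absorb one more factor M per step,
   so x_k never has to be unfolded into a convolution sum. *)
lemma stable_recursion_power_bound:
  fixes M :: "real mat" and x e :: "nat \<Rightarrow> real vec"
  assumes M: "M \<in> carrier_mat d d" and x0: "x 0 = 0\<^sub>v d"
    and e: "\<forall>k<K. e k \<in> carrier_vec d \<and> vnorm (e k) \<le> E"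
    and step: "\<forall>k<K. x (Suc k) = M *\<^sub>v x k + e k"
    and pow: "\<forall>h. opnorm (M ^\<^sub>m h) \<le> \<zeta> * \<eta> ^ h"
    and \<eta>: "0 \<le> \<eta>" and E: "0 \<le> E"
  shows "k \<le> K \<Longrightarrow> x k \<in> carrier_vec d \<and>
    (\<forall>h. vnorm (M ^\<^sub>m h *\<^sub>v x k) \<le> \<zeta> * E * \<eta> ^ h * (\<Sum>s<k. \<eta> ^ s))"
proof (induction k)
  case 0
  have "vnorm (M ^\<^sub>m h *\<^sub>v 0\<^sub>v d) \<le> opnorm (M ^\<^sub>m h) * vnorm (0\<^sub>v d)" for h
    using M by (intro vnorm_mult_mat_vec_le) simp
  then show ?case using x0 vnorm_nonneg[of "M ^\<^sub>m _ *\<^sub>v 0\<^sub>v d"] by (simp add: order_antisym)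
next
  case (Suc k)
  then have k: "k < K" and xk: "x k \<in> carrier_vec d"
    and IH: "\<And>h. vnorm (M ^\<^sub>m h *\<^sub>v x k) \<le> \<zeta> * E * \<eta> ^ h * (\<Sum>s<k. \<eta> ^ s)"
    by auto
  have ek: "e k \<in> carrier_vec d" "vnorm (e k) \<le> E" using e k by auto
  have \<zeta>: "0 \<le> \<zeta>" using pow[rule_format, of 0] opnorm_nonneg[of "M ^\<^sub>m 0"] by simp
  have "vnorm (M ^\<^sub>m h *\<^sub>v x (Suc k)) \<le> \<zeta> * E * \<eta> ^ h * (\<Sum>s<Suc k. \<eta> ^ s)" for h
  proof -
    have split: "M ^\<^sub>m h *\<^sub>v x (Suc k) = M ^\<^sub>m Suc h *\<^sub>v x k + M ^\<^sub>m h *\<^sub>v e k"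
      using M xk ek step k
      by (simp add: mult_add_distrib_mat_vec[of _ d d] assoc_mult_mat_vec[of _ d d M d])
    have "vnorm (M ^\<^sub>m h *\<^sub>v x (Suc k))
        \<le> vnorm (M ^\<^sub>m Suc h *\<^sub>v x k) + vnorm (M ^\<^sub>m h *\<^sub>v e k)"
      unfolding split using pow_carrier_mat[OF M] xk ek
      by (intro vnorm_add_le[of _ d] mult_mat_vec_carrier)
    also have "\<dots> \<le> \<zeta> * E * \<eta> ^ Suc h * (\<Sum>s<k. \<eta> ^ s) + \<zeta> * \<eta> ^ h * E"
    proof (rule add_mono[OF IH])
      have "vnorm (M ^\<^sub>m h *\<^sub>v e k) \<le> opnorm (M ^\<^sub>m h) * vnorm (e k)"
        using M ek by (intro vnorm_mult_mat_vec_le) simp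
      also have "\<dots> \<le> \<zeta> * \<eta> ^ h * E"
        using pow ek \<zeta> \<eta> by (intro mult_mono) (auto simp: opnorm_nonneg vnorm_nonneg)
      finally show "vnorm (M ^\<^sub>m h *\<^sub>v e k) \<le> \<zeta> * \<eta> ^ h * E" .
    qed
    also have "\<dots> = \<zeta> * E * \<eta> ^ h * (\<Sum>s<Suc k. \<eta> ^ s)"
      by (simp only: sum.lessThan_Suc_shift) (simp add: sum_distrib_left algebra_simps)
    finally show ?thesis .
  qed
  moreover have "x (Suc k) \<in> carrier_vec d" using M xk ek step k by simp
  ultimately show ?case by blast
qed

lemma stable_recursion_bound:
  fixes M :: "real mat" and x e :: "nat \<Rightarrow> real vec"
  assumes M: "M \<in> carrier_mat d d" and x0: "x 0 = 0\<^sub>v d"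
    and e: "\<forall>k<K. e k \<in> carrier_vec d \<and> vnorm (e k) \<le> E"
    and step: "\<forall>k<K. x (Suc k) = M *\<^sub>v x k + e k"
    and pow: "\<forall>h. opnorm (M ^\<^sub>m h) \<le> \<zeta> * \<eta> ^ h"
    and \<eta>: "0 < \<eta>" "\<eta> < 1" and E: "0 \<le> E" and k: "k \<le> K"
  shows "x k \<in> carrier_vec d" and "vnorm (x k) \<le> \<zeta> * E / (1 - \<eta>)"
proof -
  note bound = stable_recursion_power_bound[OF M x0 e step pow less_imp_le[OF \<eta>(1)] E k]
  then show xk: "x k \<in> carrier_vec d" by simp
  have \<zeta>: "0 \<le> \<zeta>" using pow[rule_format, of 0] opnorm_nonneg[of "M ^\<^sub>m 0"] by simp
  have "vnorm (M ^\<^sub>m 0 *\<^sub>v x k) \<le> \<zeta> * E * \<eta> ^ 0 * (\<Sum>s<k. \<eta> ^ s)"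
    using bound by blast
  then have "vnorm (x k) \<le> \<zeta> * E * (\<Sum>s<k. \<eta> ^ s)"
    using M xk by simp
  also have "(\<Sum>s<k. \<eta> ^ s) \<le> 1 / (1 - \<eta>)"
    using \<eta> by (simp add: sum_gp_strict divide_right_mono)
  then have "\<zeta> * E * (\<Sum>s<k. \<eta> ^ s) \<le> \<zeta> * E * (1 / (1 - \<eta>))"
    using \<zeta> E by (intro mult_left_mono) auto
  finally show "vnorm (x k) \<le> \<zeta> * E / (1 - \<eta>)" by simp
qed

lemma regressor_bound_arith:
  fixes X U a \<kappa> \<theta> Q P s m n :: real
  assumes X: "0 \<le> X" "X \<le> a * (\<theta> * Q + P)" and U: "0 \<le> U" "U \<le> \<kappa> * X + Q"
    and a: "1 \<le> a" and \<kappa>: "1 \<le> \<kappa>" and nonneg: "0 \<le> \<theta>" "0 \<le> Q" "0 \<le> P" "0 \<le> s" "0 \<le> m" "0 \<le> n"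
    and Q2: "Q\<^sup>2 = 10 * \<kappa>\<^sup>2 * m * s" and P2: "P\<^sup>2 = 5 * n * s"
  shows "X\<^sup>2 + U\<^sup>2 \<le> 20 * a\<^sup>2 * (1 + \<kappa>)\<^sup>2 * s * (2 * (\<theta>\<^sup>2 + 1) * \<kappa>\<^sup>2 * m + n)"
proof -
  have sum_sq: "(p + q)\<^sup>2 \<le> 2 * (p\<^sup>2 + q\<^sup>2)" for p q :: real
    using zero_le_power2[of "p - q"] by (simp add: power2_eq_square algebra_simps)
  have "X\<^sup>2 \<le> (a * (\<theta> * Q + P))\<^sup>2" using X by (simp add: power_mono)
  also have "\<dots> \<le> a\<^sup>2 * (2 * ((\<theta> * Q)\<^sup>2 + P\<^sup>2))"
    unfolding power_mult_distrib[of a] by (intro mult_left_mono sum_sq) simp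
  finally have X2: "X\<^sup>2 \<le> 10 * a\<^sup>2 * s * (2 * \<theta>\<^sup>2 * \<kappa>\<^sup>2 * m + n)"
    by (simp add: Q2 P2 power_mult_distrib algebra_simps)
  have "U\<^sup>2 \<le> (\<kappa> * X + Q)\<^sup>2" using U by (simp add: power_mono)
  also have "\<dots> \<le> 2 * ((\<kappa> * X)\<^sup>2 + Q\<^sup>2)" by (rule sum_sq)
  finally have U2: "U\<^sup>2 \<le> 2 * \<kappa>\<^sup>2 * X\<^sup>2 + 20 * \<kappa>\<^sup>2 * m * s"
    by (simp add: Q2 power_mult_distrib)
  have "(1 + 2 * \<kappa>\<^sup>2) * X\<^sup>2 \<le> 2 * (1 + \<kappa>)\<^sup>2 * X\<^sup>2"
    using \<kappa> by (intro mult_right_mono) (simp_all add: power2_eq_square algebra_simps)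
  also have "\<dots> \<le> 2 * (1 + \<kappa>)\<^sup>2 * (10 * a\<^sup>2 * s * (2 * \<theta>\<^sup>2 * \<kappa>\<^sup>2 * m + n))"
    using X2 by (intro mult_left_mono) simp_all
  finally have X2': "(1 + 2 * \<kappa>\<^sup>2) * X\<^sup>2 \<le> 20 * a\<^sup>2 * (1 + \<kappa>)\<^sup>2 * s * (2 * \<theta>\<^sup>2 * \<kappa>\<^sup>2 * m + n)"
    by (simp add: algebra_simps)
  have "1 * 1 \<le> a\<^sup>2 * (1 + \<kappa>)\<^sup>2"
    using a \<kappa> by (intro mult_mono one_le_power) simp_all
  then have "20 * \<kappa>\<^sup>2 * m * s \<le> 20 * \<kappa>\<^sup>2 * m * s * (2 * (a\<^sup>2 * (1 + \<kappa>)\<^sup>2))"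
    using nonneg mult_left_mono[of 1 "2 * (a\<^sup>2 * (1 + \<kappa>)\<^sup>2)" "20 * \<kappa>\<^sup>2 * m * s"] by simp
  moreover have "(1 + 2 * \<kappa>\<^sup>2) * X\<^sup>2 = X\<^sup>2 + 2 * \<kappa>\<^sup>2 * X\<^sup>2"
    by (simp add: algebra_simps)
  moreover have "20 * a\<^sup>2 * (1 + \<kappa>)\<^sup>2 * s * (2 * (\<theta>\<^sup>2 + 1) * \<kappa>\<^sup>2 * m + n)
      = 20 * a\<^sup>2 * (1 + \<kappa>)\<^sup>2 * s * (2 * \<theta>\<^sup>2 * \<kappa>\<^sup>2 * m + n)
        + 20 * \<kappa>\<^sup>2 * m * s * (2 * (a\<^sup>2 * (1 + \<kappa>)\<^sup>2))"
    by (simp add: algebra_simps)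
  ultimately show ?thesis using X2' U2 by linarith
qed

lemma closed_loop_step:
  assumes A: "A \<in> carrier_mat n n" and B: "B \<in> carrier_mat n r" and K: "K \<in> carrier_mat r n"
    and x: "x \<in> carrier_vec n" and v: "v \<in> carrier_vec r" and w: "w \<in> carrier_vec n"
  shows "A *\<^sub>v x + B *\<^sub>v (K *\<^sub>v x + v) + w = (A + B * K) *\<^sub>v x + (B *\<^sub>v v + w)"
proof -
  have "(A + B * K) *\<^sub>v x = A *\<^sub>v x + B *\<^sub>v (K *\<^sub>v x)"
    using A B K x by (simp add: add_mult_distrib_mat_vec[of A n n] assoc_mult_mat_vec[of _ n r _ n])
  moreover have "B *\<^sub>v (K *\<^sub>v x + v) = B *\<^sub>v (K *\<^sub>v x) + B *\<^sub>v v"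
    using B K x v by (simp add: mult_add_distrib_mat_vec[of B n r])
  moreover have "B *\<^sub>v (K *\<^sub>v x) \<in> carrier_vec n" "A *\<^sub>v x \<in> carrier_vec n" "B *\<^sub>v v \<in> carrier_vec n"
    using A B K x v by auto
  ultimately show ?thesis using w by simp
qed

lemma closed_loop_state_bound:
  fixes A B K :: "real mat" and x u w v :: "nat \<Rightarrow> real vec" and P Q \<theta> \<zeta> \<eta> :: real
  assumes A: "A \<in> carrier_mat n n" and B: "B \<in> carrier_mat n r" and K: "K \<in> carrier_mat r n"
    and pow: "\<forall>h. opnorm ((A + B * K) ^\<^sub>m h) \<le> \<zeta> * \<eta> ^ h" and \<eta>: "0 < \<eta>" "\<eta> < 1"
    and opB: "opnorm B \<le> \<theta>" and x0: "x 0 = 0\<^sub>v n"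
    and w: "\<forall>k<N. w k \<in> carrier_vec n \<and> vnorm (w k) \<le> P"
    and v: "\<forall>k<N. v k \<in> carrier_vec r \<and> vnorm (v k) \<le> Q"
    and u: "\<forall>k<N. u k = K *\<^sub>v x k + v k"
    and dyn: "\<forall>k<N. x (Suc k) = A *\<^sub>v x k + B *\<^sub>v u k + w k"
    and PQ: "0 \<le> P" "0 \<le> Q" and k: "k \<le> N"
  shows "x k \<in> carrier_vec n" and "vnorm (x k) \<le> \<zeta> * (\<theta> * Q + P) / (1 - \<eta>)"
proof -
  define e where "e j = B *\<^sub>v v j + w j" for j
  have \<theta>: "0 \<le> \<theta>" using opB opnorm_nonneg[of B] by simp
  have e: "\<forall>j<N. e j \<in> carrier_vec n \<and> vnorm (e j) \<le> \<theta> * Q + P"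
  proof (intro allI impI conjI)
    fix j assume j: "j < N"
    have vj: "v j \<in> carrier_vec r" "vnorm (v j) \<le> Q" and wj: "w j \<in> carrier_vec n" "vnorm (w j) \<le> P"
      using v w j by auto
    show "e j \<in> carrier_vec n" using wj unfolding e_def by (intro carrier_vecI) simp
    have "vnorm (e j) \<le> vnorm (B *\<^sub>v v j) + vnorm (w j)"
      using B vj wj unfolding e_def by (intro vnorm_add_le[of _ n]) auto
    also have "vnorm (B *\<^sub>v v j) \<le> opnorm B * vnorm (v j)"
      using B vj by (intro vnorm_mult_mat_vec_le) auto
    also have "\<dots> \<le> \<theta> * Q"
      using opB vj \<theta> by (intro mult_mono) (auto simp: opnorm_nonneg vnorm_nonneg)
    finally show "vnorm (e j) \<le> \<theta> * Q + P" using wj by simp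
  qed
  have x_carrier: "x j \<in> carrier_vec n" if "j \<le> N" for j
  proof (cases j)
    case (Suc i)
    with that have i: "i < N" by simp
    have "x j = A *\<^sub>v x i + B *\<^sub>v u i + w i" unfolding Suc by (rule dyn[rule_format, OF i])
    moreover have "w i \<in> carrier_vec n" using w i by blast
    ultimately show ?thesis by (intro carrier_vecI) simp
  qed (simp add: x0)
  have step: "\<forall>j<N. x (Suc j) = (A + B * K) *\<^sub>v x j + e j"
    using dyn u v w x_carrier unfolding e_def by (auto intro: closed_loop_step[OF A B K])
  show "vnorm (x k) \<le> \<zeta> * (\<theta> * Q + P) / (1 - \<eta>)"
    using A B K \<theta> PQ by (intro stable_recursion_bound(2)[OF _ x0 e step pow \<eta> _ k]) auto
  show "x k \<in> carrier_vec n" using x_carrier k .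
qed

lemma regressor_norm_bound:
  fixes A B K :: "real mat" and x u w v :: "nat \<Rightarrow> real vec"
    and L \<sigma> \<theta> \<kappa> \<zeta> \<eta> :: real and n r m N k :: nat
  assumes A: "A \<in> carrier_mat n n" and B: "B \<in> carrier_mat n r" and K: "K \<in> carrier_mat r n"
    and pow: "\<forall>h. opnorm ((A + B * K) ^\<^sub>m h) \<le> \<zeta> * \<eta> ^ h"
    and \<zeta>: "1 \<le> \<zeta>" and \<eta>: "0 < \<eta>" "\<eta> < 1"
    and opB: "opnorm B \<le> \<theta>" and opK: "opnorm K \<le> \<kappa>" and \<kappa>: "1 \<le> \<kappa>"
    and x0: "x 0 = 0\<^sub>v n"
    and w: "\<forall>k<N. w k \<in> carrier_vec n \<and> vnorm (w k) \<le> \<sigma> * sqrt (5 * n * L)"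
    and v: "\<forall>k<N. v k \<in> carrier_vec r \<and> vnorm (v k) \<le> \<kappa> * \<sigma> * sqrt (10 * m * L)"
    and u: "\<forall>k<N. u k = K *\<^sub>v x k + v k"
    and dyn: "\<forall>k<N. x (Suc k) = A *\<^sub>v x k + B *\<^sub>v u k + w k"
    and L: "0 \<le> L" and \<sigma>: "0 \<le> \<sigma>" and k: "k < N"
  shows "x k \<in> carrier_vec n"
    and "(vnorm (x k @\<^sub>v u k))\<^sup>2
    \<le> 20 * \<zeta>\<^sup>2 * (1 + \<kappa>)\<^sup>2 * \<sigma>\<^sup>2 / (1 - \<eta>)\<^sup>2 * (2 * (\<theta>\<^sup>2 + 1) * \<kappa>\<^sup>2 * m + n) * L"
proof -
  let ?Q = "\<kappa> * \<sigma> * sqrt (10 * m * L)" and ?P = "\<sigma> * sqrt (5 * n * L)"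
  note state = closed_loop_state_bound[OF A B K pow \<eta> opB x0 w v u dyn _ _ less_imp_le[OF k]]
  show xk: "x k \<in> carrier_vec n" using state \<kappa> \<sigma> L by simp
  have x_bound: "vnorm (x k) \<le> \<zeta> / (1 - \<eta>) * (\<theta> * ?Q + ?P)"
    using state \<kappa> \<sigma> L by simp
  have "vnorm (u k) \<le> vnorm (K *\<^sub>v x k) + vnorm (v k)"
    using u v K xk k by (simp add: vnorm_add_le[of _ r])
  also have "vnorm (K *\<^sub>v x k) \<le> opnorm K * vnorm (x k)"
    using K xk by (intro vnorm_mult_mat_vec_le) auto
  also have "\<dots> \<le> \<kappa> * vnorm (x k)"
    using opK by (intro mult_right_mono) (simp_all add: vnorm_nonneg)
  finally have u_bound: "vnorm (u k) \<le> \<kappa> * vnorm (x k) + ?Q" using v k by auto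
  have \<theta>: "0 \<le> \<theta>" using opB opnorm_nonneg[of B] by simp
  have a: "1 \<le> \<zeta> / (1 - \<eta>)" using \<zeta> \<eta> by (simp add: le_divide_eq)
  have Q2: "?Q\<^sup>2 = 10 * \<kappa>\<^sup>2 * real m * (\<sigma>\<^sup>2 * L)" and P2: "?P\<^sup>2 = 5 * real n * (\<sigma>\<^sup>2 * L)"
    using L by (simp_all add: power_mult_distrib)
  have "(vnorm (x k))\<^sup>2 + (vnorm (u k))\<^sup>2
      \<le> 20 * (\<zeta> / (1 - \<eta>))\<^sup>2 * (1 + \<kappa>)\<^sup>2 * (\<sigma>\<^sup>2 * L) * (2 * (\<theta>\<^sup>2 + 1) * \<kappa>\<^sup>2 * m + n)"
    using \<kappa> \<sigma> L
    by (intro regressor_bound_arith[OF vnorm_nonneg x_bound vnorm_nonneg u_bound a \<kappa> \<theta> _ _ _ _ _ Q2 P2])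
      simp_all
  also have "\<dots> = 20 * \<zeta>\<^sup>2 * (1 + \<kappa>)\<^sup>2 * \<sigma>\<^sup>2 / (1 - \<eta>)\<^sup>2 * (2 * (\<theta>\<^sup>2 + 1) * \<kappa>\<^sup>2 * m + n) * L"
    by (simp add: power_divide)
  finally show "(vnorm (x k @\<^sub>v u k))\<^sup>2
    \<le> 20 * \<zeta>\<^sup>2 * (1 + \<kappa>)\<^sup>2 * \<sigma>\<^sup>2 / (1 - \<eta>)\<^sup>2 * (2 * (\<theta>\<^sup>2 + 1) * \<kappa>\<^sup>2 * m + n) * L"
    by (simp add: vnorm_append_power2)
qed

section \<open>Gram matrices\<close>

definition gram_mat :: "nat \<Rightarrow> real \<Rightarrow> 'i set \<Rightarrow> ('i \<Rightarrow> real vec) \<Rightarrow> real mat" where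
  "gram_mat d lam I z = mat d d (\<lambda>(a, b). (if a = b then lam else 0) + (\<Sum>i\<in>I. z i $ a * z i $ b))"

lemma gram_mat_carrier: "gram_mat d lam I z \<in> carrier_mat d d"
  by (simp add: gram_mat_def)

lemma transpose_gram_mat: "transpose_mat (gram_mat d lam I z) = gram_mat d lam I z"
  by (intro eq_matI) (auto simp: gram_mat_def mult.commute)

lemma quadratic_form_gram_mat:
  assumes z: "\<forall>i\<in>I. z i \<in> carrier_vec d" and y: "y \<in> carrier_vec d"
  shows "y \<bullet> (gram_mat d lam I z *\<^sub>v y) = lam * (y \<bullet> y) + (\<Sum>i\<in>I. (z i \<bullet> y)\<^sup>2)"
proof -
  have "y \<bullet> (gram_mat d lam I z *\<^sub>v y) = (\<Sum>a<d. \<Sum>b<d. y $ a * gram_mat d lam I z $$ (a, b) * y $ b)"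
    using y by (intro quadratic_form_eq_sum gram_mat_carrier)
  also have "\<dots> = (\<Sum>a<d. \<Sum>b<d. y $ a * (if a = b then lam else 0) * y $ b)
      + (\<Sum>a<d. \<Sum>b<d. y $ a * (\<Sum>i\<in>I. z i $ a * z i $ b) * y $ b)"
    by (simp add: gram_mat_def sum.distrib distrib_left distrib_right)
  also have "(\<Sum>a<d. \<Sum>b<d. y $ a * (if a = b then lam else 0) * y $ b) = lam * (y \<bullet> y)"
  proof -
    have "(\<Sum>b<d. y $ a * (if a = b then lam else 0) * y $ b) = lam * (y $ a * y $ a)" if "a < d" for a
      using that by (simp add: if_distrib if_distribR sum.delta cong: if_cong)
    then show ?thesis
      using y by (simp add: scalar_prod_def atLeast0LessThan sum_distrib_left)
  qed
  also have "(\<Sum>a<d. \<Sum>b<d. y $ a * (\<Sum>i\<in>I. z i $ a * z i $ b) * y $ b)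
      = (\<Sum>a<d. \<Sum>i\<in>I. \<Sum>b<d. (z i $ a * y $ a) * (z i $ b * y $ b))"
    by (simp add: sum_distrib_left sum_distrib_right sum.swap[of _ "{..<d}" I] ac_simps)
  also have "\<dots> = (\<Sum>i\<in>I. (\<Sum>a<d. z i $ a * y $ a) * (\<Sum>b<d. z i $ b * y $ b))"
    by (subst sum.swap) (simp add: sum_product)
  also have "\<dots> = (\<Sum>i\<in>I. (z i \<bullet> y)\<^sup>2)"
    using y by (simp add: scalar_prod_def atLeast0LessThan power2_eq_square)
  finally show ?thesis .
qed

lemma det_gram_mat_bounds:
  assumes z: "\<forall>i\<in>I. z i \<in> carrier_vec d" and lam: "0 < lam"
  shows "lam ^ d \<le> det (gram_mat d lam I z)"
    and "det (gram_mat d lam I z) \<le> (lam + (\<Sum>i\<in>I. (vnorm (z i))\<^sup>2)) ^ d"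
proof -
  have "lam ^ d \<le> det (gram_mat d lam I z) \<and> det (gram_mat d lam I z) \<le> (lam + (\<Sum>i\<in>I. (vnorm (z i))\<^sup>2)) ^ d"
  proof (rule det_rayleigh_bounds[OF gram_mat_carrier transpose_gram_mat lam]; intro ballI)
    fix y :: "real vec" assume y: "y \<in> carrier_vec d"
    show "lam * (y \<bullet> y) \<le> y \<bullet> (gram_mat d lam I z *\<^sub>v y)"
      unfolding quadratic_form_gram_mat[OF z y] by (simp add: sum_nonneg)
    have "(\<Sum>i\<in>I. (z i \<bullet> y)\<^sup>2) \<le> (\<Sum>i\<in>I. (vnorm (z i))\<^sup>2 * (y \<bullet> y))"
      using z y by (intro sum_mono) (simp add: vnorm_power2 scalar_prod_power2_le)
    then show "y \<bullet> (gram_mat d lam I z *\<^sub>v y) \<le> (lam + (\<Sum>i\<in>I. (vnorm (z i))\<^sup>2)) * (y \<bullet> y)"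
      unfolding quadratic_form_gram_mat[OF z y] by (simp add: sum_distrib_right distrib_right)
  qed
  then show "lam ^ d \<le> det (gram_mat d lam I z)"
    and "det (gram_mat d lam I z) \<le> (lam + (\<Sum>i\<in>I. (vnorm (z i))\<^sup>2)) ^ d" by simp_all
qed

lemma mtrace_quadratic_form:
  assumes D: "D \<in> carrier_mat r d" and V: "V \<in> carrier_mat d d"
  shows "mtrace (D * V * transpose_mat D) = (\<Sum>i<r. row D i \<bullet> (V *\<^sub>v row D i))"
  unfolding mtrace_def
proof (rule sum.cong)
  show "{..<dim_row (D * V * transpose_mat D)} = {..<r}" using D by simp
next
  fix i assume "i \<in> {..<r}"
  then have i: "i < r" by simp
  have "(D * V * transpose_mat D) $$ (i, i) = (\<Sum>k<d. \<Sum>s<d. D $$ (i, k) * V $$ (k, s) * D $$ (i, s))"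
    using D V i by (simp add: scalar_prod_def atLeast0LessThan sum_distrib_left ac_simps)
  also have "\<dots> = row D i \<bullet> (V *\<^sub>v row D i)"
    using D V i by (subst quadratic_form_eq_sum[OF V]) auto
  finally show "(D * V * transpose_mat D) $$ (i, i) = row D i \<bullet> (V *\<^sub>v row D i)" .
qed

lemma fro_power2_le_mtrace:
  assumes D: "D \<in> carrier_mat r d" and V: "V \<in> carrier_mat d d"
    and lower: "\<forall>x\<in>carrier_vec d. \<mu> * (x \<bullet> x) \<le> x \<bullet> (V *\<^sub>v x)"
  shows "\<mu> * (fro D)\<^sup>2 \<le> mtrace (D * V * transpose_mat D)"
proof -
  have "\<mu> * (fro D)\<^sup>2 = (\<Sum>i<r. \<mu> * (row D i \<bullet> row D i))"
    using D by (simp add: fro_power2_eq_sum_rows vnorm_power2 sum_distrib_left)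
  also have "\<dots> \<le> (\<Sum>i<r. row D i \<bullet> (V *\<^sub>v row D i))"
    using lower D by (intro sum_mono) auto
  finally show ?thesis using mtrace_quadratic_form[OF D V] by simp
qed

lemma loewner_ge_shift_quadratic_form:
  assumes V: "V \<in> carrier_mat d d" and ge: "loewner_ge d (V - a \<cdot>\<^sub>m 1\<^sub>m d) (b \<cdot>\<^sub>m 1\<^sub>m d)"
    and y: "y \<in> carrier_vec d"
  shows "(a + b) * (y \<bullet> y) \<le> y \<bullet> (V *\<^sub>v y)"
proof -
  let ?W = "(V - a \<cdot>\<^sub>m 1\<^sub>m d) - b \<cdot>\<^sub>m 1\<^sub>m d"
  have W: "?W \<in> carrier_mat d d" by (intro minus_carrier_mat) simp
  have "y \<bullet> (?W *\<^sub>v y) = (\<Sum>i<d. \<Sum>j<d. y $ i * V $$ (i, j) * y $ j - (if i = j then (a + b) * (y $ i * y $ j) else 0))"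
    unfolding quadratic_form_eq_sum[OF W y] using V by (intro sum.cong refl) (auto simp: algebra_simps)
  also have "\<dots> = y \<bullet> (V *\<^sub>v y) - (a + b) * (y \<bullet> y)"
    using V y by (simp add: quadratic_form_eq_sum[OF V y] sum_subtractf scalar_prod_def
        atLeast0LessThan sum_distrib_left mult.assoc)
  finally show ?thesis using ge y unfolding loewner_ge_def by fastforce
qed

section \<open>The least-squares error bound\<close>

lemma ln_det_ratio_le:
  fixes lam X Y p D c :: real and d e :: nat
  assumes lam: "0 < lam" and X: "0 \<le> X" "X / lam \<le> Y / p" and p: "1 \<le> p"
    and D: "0 < D" "D \<le> (lam + X) ^ d" and d: "1 \<le> d" "d \<le> e" and c: "1 \<le> c"
  shows "ln (c * p * D / lam ^ d) \<le> e * ln (c * (p + Y))"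
proof -
  have "0 \<le> Y / p" using X lam by (meson divide_nonneg_pos order_trans)
  then have Y: "0 \<le> Y" using p by (simp add: zero_le_divide_iff)
  have "D / lam ^ d \<le> (lam + X) ^ d / lam ^ d"
    using D lam by (simp add: divide_right_mono)
  also have "\<dots> = (1 + X / lam) ^ d"
    using lam by (simp add: power_divide[symmetric] add_divide_distrib)
  also have "\<dots> \<le> ((p + Y) / p) ^ d"
    using X lam p by (intro power_mono) (simp_all add: add_divide_distrib)
  finally have "c * p * D / lam ^ d \<le> c * (p * ((p + Y) / p) ^ d)"
    using c p by (simp add: mult_left_mono mult.assoc times_divide_eq_right[symmetric]
        del: times_divide_eq_right)
  also have "p * ((p + Y) / p) ^ d \<le> (p + Y) ^ d"
  proof -
    obtain d' where d': "d = Suc d'" using d by (cases d) auto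
    have "(p + Y) / p \<le> p + Y" using p Y by (simp add: divide_le_eq mult_le_cancel_left1)
    then have "((p + Y) / p) ^ d' \<le> (p + Y) ^ d'" using p Y by (intro power_mono) auto
    then show ?thesis
      using p Y by (simp add: d' mult_left_mono)
  qed
  also have "c * (p + Y) ^ d \<le> (c * (p + Y)) ^ e"
  proof -
    have "c * (p + Y) ^ d \<le> c ^ d * (p + Y) ^ d"
      using c d p Y by (intro mult_right_mono) (auto simp: power_increasing[of 1 d c, simplified])
    also have "\<dots> \<le> (c * (p + Y)) ^ e"
      unfolding power_mult_distrib[symmetric]
      using c d p Y by (intro power_increasing) (auto intro: order_trans[OF _ mult_mono[of 1 c 1]])
    finally show ?thesis .
  qed
  finally have "c * p * D / lam ^ d \<le> (c * (p + Y)) ^ e"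
    using c by (simp add: mult_left_mono)
  moreover have "0 < c * p * D / lam ^ d" using c p D lam by simp
  ultimately have "ln (c * p * D / lam ^ d) \<le> ln ((c * (p + Y)) ^ e)" by simp
  also have "\<dots> = e * ln (c * (p + Y))" using c p Y by (simp add: ln_realpow)
  finally show ?thesis .
qed

lemma error_bound_of_tau:
  fixes err Nm1 tau i s lam th eps nn nm Lth Lt F :: real
  assumes Nm1: "1 \<le> Nm1" and i: "1 \<le> i" and s: "0 < s" and lam: "0 < lam" and err: "0 \<le> err"
    and nn: "2 \<le> nn" "nn \<le> nm" and Lt: "0 < Lt" and eps: "eps \<noteq> 0"
    and tr: "Nm1 * tau * i * s / 80 * err\<^sup>2 \<le> 4 * s * nn * Lth + 2 * lam * F"
    and F: "F \<le> 2 * nn * th\<^sup>2" and Lth: "Lth \<le> nm * Lt"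
    and tau: "160 * nn * (lam * th\<^sup>2 * nn / s + 2 * nm * Lt) / (Nm1 * eps\<^sup>2) \<le> tau"
  shows "err \<le> sqrt (eps\<^sup>2 / i)"
proof -
  define R where "R = 160 * nn * (lam * th\<^sup>2 * nn / s + 2 * nm * Lt)"
  have "0 < R" unfolding R_def using nn Lt lam s
    by (intro mult_pos_pos add_nonneg_pos) (auto intro: divide_nonneg_pos)
  have R_le: "R \<le> tau * (Nm1 * eps\<^sup>2)"
    using tau Nm1 eps unfolding R_def by (simp add: pos_divide_le_eq)
  moreover have "0 < Nm1 * eps\<^sup>2" using Nm1 eps by simp
  ultimately have tau_pos: "0 < tau"
    using \<open>0 < R\<close> by (metis order_less_le_trans zero_less_mult_pos2)
  have "4 * s * nn * Lth \<le> 4 * s * nn * (nm * Lt)"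
    using Lth s nn by (intro mult_left_mono) auto
  moreover have "2 * lam * F \<le> 2 * lam * (nn * nn * th\<^sup>2)"
  proof -
    have "2 * (nn * th\<^sup>2) \<le> nn * (nn * th\<^sup>2)"
      using nn by (intro mult_right_mono) simp_all
    with F have "F \<le> nn * nn * th\<^sup>2" by (simp add: mult.assoc)
    then show ?thesis using lam by simp
  qed
  moreover have "s * R / 80 = 4 * s * nn * (nm * Lt) + 2 * lam * (nn * nn * th\<^sup>2)"
    unfolding R_def using s by (simp add: field_simps power2_eq_square)
  ultimately have "Nm1 * tau * i * s / 80 * err\<^sup>2 \<le> s * R / 80" using tr by linarith
  then have "Nm1 * tau * (i * err\<^sup>2) \<le> R" using s by (simp add: field_simps)
  also have "\<dots> \<le> Nm1 * tau * eps\<^sup>2" using R_le by (simp add: ac_simps)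
  finally have "i * err\<^sup>2 \<le> eps\<^sup>2" using Nm1 tau_pos by (simp add: mult_le_cancel_left_pos)
  then have "err\<^sup>2 \<le> eps\<^sup>2 / i" using i by (simp add: field_simps)
  then show ?thesis using err by (simp add: real_le_rsqrt)
qed

lemma estimation_round_in_horizon:
  fixes T ne p tau1 tau2 l j t :: nat and Tij :: "nat \<Rightarrow> nat \<Rightarrow> nat"
  assumes Tij: "\<forall>i j. Tij i j = 1 + (i - 1) * (p * tau1 + tau2) + (j - 1) * tau1"
    and T: "ne * (p * tau1 + tau2) = T"
    and l: "l \<in> {1..ne}" and j: "j \<in> {1..p}" and t: "Tij l j \<le> t" "t < Tij l (Suc j)"
  shows "t \<in> {1..T}"
proof -
  let ?P = "p * tau1 + tau2"
  have "t < 1 + (l - 1) * ?P + j * tau1" using t Tij by simp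
  also have "\<dots> \<le> 1 + (ne - 1) * ?P + p * tau1" using l j by (intro add_mono mult_le_mono1) auto
  also have "\<dots> \<le> 1 + T" using T l by (cases ne) auto
  finally show ?thesis using t Tij by simp
qed

lemma card_estimation_rounds_le:
  assumes Tij: "\<forall>i j. Tij i j = 1 + (i - 1) * (p * tau1 + tau2) + (j - 1) * tau1"
    and j: "1 \<le> j" and i: "i \<le> ne" and ne: "ne * tau1 * p \<le> T"
  shows "card (SIGMA l:{1..i}. {Tij l j..<Tij l (Suc j)} \<times> {..<N}) * p \<le> N * T"
proof -
  have "Tij l (Suc j) = Tij l j + tau1" for l using Tij j by (cases j) auto
  then have "card (SIGMA l:{1..i}. {Tij l j..<Tij l (Suc j)} \<times> {..<N}) * p = N * (i * tau1 * p)"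
    by (simp add: card_cartesian_product)
  also have "\<dots> \<le> N * T" using i ne by (meson le_trans mult_le_mono1 mult_le_mono2)
  finally show ?thesis .
qed

lemma fro_power2_hcat_le:
  assumes A: "A \<in> carrier_mat n a" and C: "C \<in> carrier_mat n c"
    and "opnorm A \<le> \<theta>" "opnorm C \<le> \<theta>"
  shows "(fro (hcat A C))\<^sup>2 \<le> 2 * real n * \<theta>\<^sup>2"
proof -
  have fro_le: "(fro M)\<^sup>2 \<le> n * \<theta>\<^sup>2" if "M \<in> carrier_mat n b" "opnorm M \<le> \<theta>" for M b
  proof -
    have "(fro M)\<^sup>2 \<le> n * (opnorm M)\<^sup>2" using fro_power2_le_opnorm[of M] that(1) by simp
    also have "\<dots> \<le> n * \<theta>\<^sup>2"
      using that(2) opnorm_nonneg[of M] by (intro mult_left_mono power_mono) simp_all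
    finally show ?thesis .
  qed
  have "(fro (hcat A C))\<^sup>2 = (fro A)\<^sup>2 + (fro C)\<^sup>2" using A C by (intro fro_hcat) simp
  with fro_le[OF A] fro_le[OF C] assms(3,4) show ?thesis by simp
qed

lemma ln_det_gram_mat_le:
  fixes zr :: "'r \<Rightarrow> real vec" and n m p N T d :: nat and lam delta zb :: real
  assumes zr: "\<forall>r\<in>R. zr r \<in> carrier_vec d" and X: "(\<Sum>r\<in>R. (vnorm (zr r))\<^sup>2) * p \<le> N * T * zb"
    and lam: "0 < lam" and delta: "0 < delta" "delta < 1" and p: "1 \<le> p"
    and n: "2 \<le> n" and d: "n \<le> d" "d \<le> n + m"
  shows "ln (8 * n * p * det (gram_mat d lam R zr) / (delta * det (lam \<cdot>\<^sub>m 1\<^sub>m d)))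
    \<le> real (n + m) * ln (8 * real n / delta * (real p + real N * real T * zb / lam))"
proof -
  let ?X = "\<Sum>r\<in>R. (vnorm (zr r))\<^sup>2"
  have "0 < det (gram_mat d lam R zr)"
    using det_gram_mat_bounds(1)[OF zr lam] lam by (meson less_le_trans zero_less_power)
  moreover have "?X / lam \<le> (N * T * zb / lam) / p"
    using X lam p by (simp add: field_simps)
  moreover have "1 \<le> 8 * real n / delta" using n delta by (simp add: le_divide_eq)
  ultimately have "ln (8 * real n / delta * p * det (gram_mat d lam R zr) / lam ^ d)
      \<le> real (n + m) * ln (8 * real n / delta * (real p + real N * real T * zb / lam))"
    using n d p by (intro ln_det_ratio_le[OF lam _ _ _ _ det_gram_mat_bounds(2)[OF zr lam]])
      (auto simp: sum_nonneg)
  moreover have "8 * n * p * det (gram_mat d lam R zr) / (delta * det (lam \<cdot>\<^sub>m 1\<^sub>m d))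
      = 8 * real n / delta * p * det (gram_mat d lam R zr) / lam ^ d"
    by (simp add: det_smult)
  ultimately show ?thesis by simp
qed

lemma estimation_error_bound:
  fixes zr :: "'r \<Rightarrow> real vec" and Theta Thhat :: "real mat"
    and n m p N T d tau1 i :: nat and lam sigma delta zb vartheta eps :: real
  assumes zr: "\<forall>r\<in>R. zr r \<in> carrier_vec d" and X: "(\<Sum>r\<in>R. (vnorm (zr r))\<^sup>2) * p \<le> N * T * zb"
    and lam: "0 < lam" and sigma: "0 < sigma" and delta: "0 < delta" "delta < 1"
    and p: "1 \<le> p" and N: "2 \<le> N" and i: "1 \<le> i" and n: "2 \<le> n" and d: "n \<le> d" "d \<le> n + m"
    and zb: "0 \<le> zb" and eps: "eps \<noteq> 0"
    and Theta: "Theta \<in> carrier_mat n d" "(fro Theta)\<^sup>2 \<le> 2 * real n * vartheta\<^sup>2"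
    and Thhat: "Thhat \<in> carrier_mat n d"
    and E_z: "loewner_ge d (gram_mat d lam R zr - lam \<cdot>\<^sub>m 1\<^sub>m d)
      (((real N - 1) * tau1 * i * sigma\<^sup>2 / 80) \<cdot>\<^sub>m 1\<^sub>m d)"
    and E_Theta: "mtrace ((Theta - Thhat) * gram_mat d lam R zr * transpose_mat (Theta - Thhat))
      \<le> 4 * sigma\<^sup>2 * n * ln (8 * n * p * det (gram_mat d lam R zr) / (delta * det (lam \<cdot>\<^sub>m 1\<^sub>m d)))
        + 2 * lam * (fro Theta)\<^sup>2"
    and tau1: "tau1 = nat \<lceil>160 * n * (lam * vartheta\<^sup>2 * n / sigma\<^sup>2
        + 2 * (n + m) * ln (8 * n / delta * (p + N * T * zb / lam)))
        / ((real N - 1) * eps\<^sup>2)\<rceil>"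
  shows "opnorm (Thhat - Theta) \<le> sqrt (eps\<^sup>2 / i)"
proof -
  let ?G = "gram_mat d lam R zr"
  let ?c = "(real N - 1) * tau1 * i * sigma\<^sup>2 / 80"
  have G: "?G \<in> carrier_mat d d" by (rule gram_mat_carrier)
  have "opnorm (Thhat - Theta) \<le> fro (Theta - Thhat)"
    using opnorm_le_fro fro_minus_commute[OF Thhat Theta(1)] by metis
  then have "?c * (opnorm (Thhat - Theta))\<^sup>2 \<le> (lam + ?c) * (fro (Theta - Thhat))\<^sup>2"
    using N lam by (intro mult_mono power_mono) (auto simp: opnorm_nonneg fro_nonneg)
  also have "\<dots> \<le> mtrace ((Theta - Thhat) * ?G * transpose_mat (Theta - Thhat))"
    using E_z Thhat
    by (intro fro_power2_le_mtrace[OF _ G] ballI loewner_ge_shift_quadratic_form[OF G]) auto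
  finally have conf: "?c * (opnorm (Thhat - Theta))\<^sup>2
      \<le> 4 * sigma\<^sup>2 * n * ln (8 * n * p * det ?G / (delta * det (lam \<cdot>\<^sub>m 1\<^sub>m d))) + 2 * lam * (fro Theta)\<^sup>2"
    using E_Theta by linarith
  let ?Lt = "ln (8 * real n / delta * (real p + real N * real T * zb / lam))"
  have Lt: "0 < ?Lt"
  proof -
    have a: "1 < 8 * real n / delta" using n delta by (simp add: less_divide_eq)
    have "1 \<le> real p + real N * real T * zb / lam" using p zb lam by (simp add: add_increasing2)
    then have "8 * real n / delta * 1 \<le> 8 * real n / delta * (real p + real N * real T * zb / lam)"
      using a by (intro mult_left_mono) simp_all
    then show ?thesis using a by (intro ln_gt_zero) simp
  qed
  have tau: "160 * real n * (lam * vartheta\<^sup>2 * real n / sigma\<^sup>2 + 2 * real (n + m) * ?Lt)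
      / ((real N - 1) * eps\<^sup>2) \<le> real tau1"
    unfolding tau1 by (rule order_trans[OF _ real_nat_ceiling_ge]) simp
  show ?thesis
    using N i sigma n eps
    by (intro error_bound_of_tau[OF _ _ _ lam opnorm_nonneg _ _ Lt _ conf Theta(2)
          ln_det_gram_mat_le[OF zr X lam delta p n d] tau]) auto
qed

theorem lemma9:
  fixes n m q H N T p ell :: nat
    and mi :: "nat \<Rightarrow> nat"
    and A B :: "real mat"
    and Q Qf R :: "nat \<Rightarrow> real mat"
    and nu sigma lambda delta zeta0 eta0 :: real
    and zeta eta :: "nat set \<Rightarrow> real"
    and G :: "nat \<Rightarrow> nat set" and KG :: "nat \<Rightarrow> real mat"
    and eps0 beta vartheta kappa sigQ sigR zb :: real
    and tau1 ne tau2 :: nat and Tij :: "nat \<Rightarrow> nat \<Rightarrow> nat"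
    and S :: "nat \<Rightarrow> nat set"
    and x u w wt :: "nat \<Rightarrow> nat \<Rightarrow> real vec"
    and Thhat :: "nat \<Rightarrow> nat \<Rightarrow> real mat"
    and Theta :: "nat \<Rightarrow> real mat"
    and z :: "nat \<Rightarrow> nat \<Rightarrow> real vec"
    and V :: "nat \<Rightarrow> nat \<Rightarrow> real mat"
    and obj :: "nat \<Rightarrow> nat \<Rightarrow> real mat \<Rightarrow> real"
  assumes
    \<comment> \<open>setting\<close>
    m_def: "m = (\<Sum>i\<in>{1..q}. mi i)"
    and A_dim: "A \<in> carrier_mat n n" and B_dim: "B \<in> carrier_mat n m"
    and H_pos: "H \<ge> 1" and N_ge: "N \<ge> 2" and T_pos: "T \<ge> 1"
    and Q_psd: "\<forall>t\<in>{1..T}. psd n (Q t) \<and> psd n (Qf t)"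
    and R_pd: "\<forall>t\<in>{1..T}. pd m (R t)"
    and sigQ_def: "sigQ = max (Max {opnorm (Q t) | t. t \<in> {1..T}}) (Max {opnorm (Qf t) | t. t \<in> {1..T}})"
    and sigR_def: "sigR = Max {opnorm (R t) | t. t \<in> {1..T}}"
    and vartheta_def: "vartheta = max (opnorm A) (opnorm B)"
    and zeta_eta: "\<forall>S'. S' \<subseteq> {1..q} \<and> card S' = H \<longrightarrow>
         zeta S' \<ge> 1 \<and> 0 < eta S' \<and> eta S' < 1 \<and>
         (\<forall>t\<in>{1..T}. \<forall>k1 k2. k1 \<le> k2 \<and> k2 \<le> N \<longrightarrow>
            opnorm (psi n (\<lambda>k. A + BS mi B S' * Kk mi A B S' (Q t) (Qf t) (R t) N k) k1 k2)
              \<le> zeta S' * eta S' ^ (k2 - k1))"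
    and beta_def: "beta = max 1 (eps0 + opnorm A)"
    and eps0_def: "eps0 = Min {(1 - eta S') / (6 * opnorm (BS mi B S') * zeta S')
          / (1 + GammaS mi A B Q Qf R N T S') ^ 3
          / (20 * (1 + GammaS mi A B Q Qf R N T S') ^ 9 * sigR) ^ (ell - 1)
          / (32 * real ell powr (5/2) * beta ^ (2 * (ell - 1)) * (1 + 1 / nu)
               * (1 + GammaS mi A B Q Qf R N T S') ^ 3 * max sigQ sigR)
        | S'. S' \<subseteq> {1..q} \<and> card S' = H}"
    \<comment> \<open>Assumption 1\<close>
    and ass1: "\<forall>t\<in>{1..T}. pd n (Qf t) \<and> svmin (Q t) \<ge> 1 \<and> svmin (R t) \<ge> 1"
    \<comment> \<open>Assumption 2\<close>
    and ass2: "1 \<le> ell \<and> ell \<le> n - 1 \<and> nu > 0 \<and>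
       (\<forall>S'. S' \<subseteq> {1..q} \<and> card S' = H \<longrightarrow> svmin (ctrb A (BS mi B S') ell) \<ge> nu)"
    \<comment> \<open>Assumption 4\<close>
    and ass4_part: "p \<ge> 1 \<and> (\<Union>j\<in>{1..p}. G j) = {1..q} \<and>
       (\<forall>j\<in>{1..p}. G j \<noteq> {} \<and> card (G j) \<le> H) \<and>
       (\<forall>j\<in>{1..p}. \<forall>j'\<in>{1..p}. j \<noteq> j' \<longrightarrow> G j \<inter> G j' = {})"
    and ass4_K: "\<forall>j\<in>{1..p}. KG j \<in> carrier_mat (mS mi (G j)) n \<and>
       (\<forall>k. opnorm ((A + BS mi B (G j) * KG j) ^\<^sub>m k) \<le> zeta0 * eta0 ^ k)"
    and zeta0_eta0: "zeta0 \<ge> 1 \<and> 0 < eta0 \<and> eta0 < 1"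
    and kappa_def: "kappa = max (Max {opnorm (KG j) | j. j \<in> {1..p}}) 1"
    \<comment> \<open>algorithm parameters\<close>
    and lambda_pos: "lambda > 0" and sigma_pos: "sigma > 0"
    and delta: "0 < delta \<and> delta < 1"
    and zb_def: "zb = 20 * zeta0\<^sup>2 * (1 + kappa)\<^sup>2 * sigma\<^sup>2 / (1 - eta0)\<^sup>2
        * (2 * (vartheta\<^sup>2 + 1) * kappa\<^sup>2 * m + n) * ln (8 * N * T / delta)"
    and tau1_def: "tau1 = nat \<lceil>160 * n * (lambda * vartheta\<^sup>2 * n / sigma\<^sup>2
        + 2 * (n + m) * ln (8 * n / delta * (p + N * T * zb / lambda)))
        / ((real N - 1) * eps0\<^sup>2)\<rceil>"
    and ne_def: "ne = nat \<lceil>sqrt T / (tau1 * p)\<rceil>"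
    and tau2_int: "ne * tau1 * p \<le> T \<and> ne dvd (T - ne * tau1 * p)"
    and tau2_def: "tau2 = (T - ne * tau1 * p) div ne"
    and Tij_def: "\<forall>i j. Tij i j = 1 + (i - 1) * (p * tau1 + tau2) + (j - 1) * tau1"
    \<comment> \<open>closed-loop system (one realisation of the noise)\<close>
    and S_sub: "\<forall>t\<in>{1..T}. S t \<subseteq> {1..q}"
    and x0: "\<forall>t\<in>{1..T}. x t 0 = 0\<^sub>v n"
    and w_dim: "\<forall>t\<in>{1..T}. \<forall>k<N. w t k \<in> carrier_vec n"
    and u_dim: "\<forall>t\<in>{1..T}. \<forall>k<N. u t k \<in> carrier_vec (mS mi (S t))"
    and dyn: "\<forall>t\<in>{1..T}. \<forall>k<N.
        x t (Suc k) = A *\<^sub>v x t k + BS mi B (S t) *\<^sub>v u t k + w t k"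
    \<comment> \<open>estimation rounds\<close>
    and est: "\<forall>i\<in>{1..ne}. \<forall>j\<in>{1..p}. \<forall>t. Tij i j \<le> t \<and> t < Tij i (Suc j) \<longrightarrow>
        S t = G j \<and> (\<forall>k<N. wt t k \<in> carrier_vec (mS mi (G j)) \<and>
                           u t k = KG j *\<^sub>v x t k + wt t k)"
    \<comment> \<open>remaining rounds: an H-subset of actuators (chosen by Exp3.S)\<close>
    and nonest: "\<forall>t\<in>{1..T}. (\<not> (\<exists>i\<in>{1..ne}. \<exists>j\<in>{1..p}. Tij i j \<le> t \<and> t < Tij i (Suc j)))
        \<longrightarrow> card (S t) = H"
    \<comment> \<open>regularised least-squares estimates\<close>
    and z_def: "\<forall>t k. z t k = x t k @\<^sub>v u t k"
    and Theta_def: "\<forall>j. Theta j = hcat A (BS mi B (G j))"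
    and obj_def: "\<forall>j i Y. obj j i Y = lambda * (fro Y)\<^sup>2 +
        (\<Sum>l\<in>{1..i}. \<Sum>t\<in>{Tij l j..<Tij l (Suc j)}. \<Sum>k<N.
            (vnorm (x t (Suc k) - Y *\<^sub>v z t k))\<^sup>2)"
    and Thhat_min: "\<forall>i\<in>{1..ne}. \<forall>j\<in>{1..p}.
        Thhat j i \<in> carrier_mat n (n + mS mi (G j)) \<and>
        (\<forall>Y \<in> carrier_mat n (n + mS mi (G j)). obj j i (Thhat j i) \<le> obj j i Y)"
    and V_def: "\<forall>j i. V j i = mat (n + mS mi (G j)) (n + mS mi (G j))
        (\<lambda>(a,b). (if a = b then lambda else 0) +
           (\<Sum>l\<in>{1..i}. \<Sum>t\<in>{Tij l j..<Tij l (Suc j)}. \<Sum>k<N. z t k $ a * z t k $ b))"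
    \<comment> \<open>the event E = E_w \<inter> E_wt \<inter> E_Theta \<inter> E_z\<close>
    and E_w: "\<forall>t\<in>{1..T}. \<forall>k<N. vnorm (w t k) \<le> sigma * sqrt (5 * n * ln (8 * N * T / delta))"
    and E_wt: "\<forall>i\<in>{1..ne}. \<forall>j\<in>{1..p}. \<forall>t. Tij i j \<le> t \<and> t < Tij i (Suc j) \<longrightarrow>
        (\<forall>k<N. vnorm (wt t k) \<le> kappa * sigma * sqrt (10 * m * ln (8 * N * T / delta)))"
    and E_Theta: "\<forall>i\<in>{1..ne}. \<forall>j\<in>{1..p}.
        mtrace ((Theta j - Thhat j i) * V j i * transpose_mat (Theta j - Thhat j i))
          \<le> 4 * sigma\<^sup>2 * n * ln (8 * n * p * det (V j i)
                 / (delta * det (lambda \<cdot>\<^sub>m 1\<^sub>m (n + mS mi (G j)))))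
             + 2 * lambda * (fro (Theta j))\<^sup>2"
    and E_z: "\<forall>i\<in>{1..ne}. \<forall>j\<in>{1..p}.
        loewner_ge (n + mS mi (G j)) (V j i - lambda \<cdot>\<^sub>m 1\<^sub>m (n + mS mi (G j)))
          (((real N - 1) * tau1 * i * sigma\<^sup>2 / 80) \<cdot>\<^sub>m 1\<^sub>m (n + mS mi (G j)))"
  shows "\<forall>i\<in>{1..ne}. \<forall>j\<in>{1..p}. opnorm (Thhat j i - Theta j) \<le> sqrt (eps0\<^sup>2 / i)"
proof (intro ballI)
  fix i j assume i: "i \<in> {1..ne}" and j: "j \<in> {1..p}"
  let ?mj = "mS mi (G j)" and ?BG = "BS mi B (G j)"
  define R where "R = (SIGMA l:{1..i}. {Tij l j..<Tij l (Suc j)} \<times> {..<N})"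
  define zr where "zr = (\<lambda>(l :: nat, t, k). z t k)"
  \<comment> \<open>for eps0 = 0 the division by zero makes tau1 = 0 and then ne = 0\<close>
  have eps0: "eps0 \<noteq> 0" using i by (auto simp: ne_def tau1_def)
  have Gj: "G j \<subseteq> {1..q}" using ass4_part j by blast
  have BG: "?BG \<in> carrier_mat n ?mj" and opBG: "opnorm ?BG \<le> vartheta"
    using BS_carrier[OF B_dim[unfolded m_def] Gj] opnorm_BS_le[OF B_dim[unfolded m_def] Gj]
    by (simp_all add: vartheta_def)
  have KG: "KG j \<in> carrier_mat ?mj n" "\<forall>k. opnorm ((A + ?BG * KG j) ^\<^sub>m k) \<le> zeta0 * eta0 ^ k"
    using ass4_K j by auto
  have opKG: "opnorm (KG j) \<le> kappa"
    using j unfolding kappa_def by (auto intro!: Max_ge le_max_iff_disj[THEN iffD2])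
  have horizon: "ne * (p * tau1 + tau2) = T"
    using tau2_int unfolding tau2_def by (simp add: algebra_simps)
  have "2 \<le> real N * real T" using N_ge T_pos mult_mono[of 2 "real N" 1 "real T"] by simp
  then have L: "0 \<le> ln (8 * N * T / delta)" using delta by (simp add: le_divide_eq)
  have regressors: "zr r \<in> carrier_vec (n + ?mj) \<and> (vnorm (zr r))\<^sup>2 \<le> zb" if "r \<in> R" for r
  proof -
    obtain l t k where r: "r = (l, t, k)" by (cases r) auto
    with that i have l: "l \<in> {1..ne}" and t: "Tij l j \<le> t" "t < Tij l (Suc j)" and k: "k < N"
      by (auto simp: R_def)
    have tT: "t \<in> {1..T}" by (rule estimation_round_in_horizon[OF Tij_def horizon l j t])
    have round: "S t = G j" "\<forall>k<N. wt t k \<in> carrier_vec ?mj \<and> u t k = KG j *\<^sub>v x t k + wt t k"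
      using est l j t by blast+
    note bound = regressor_norm_bound[OF A_dim BG KG _ _ _ opBG opKG _ _ _ _ _ _ L _ k,
        where x="x t" and u="u t" and w="w t" and v="wt t" and \<sigma>=sigma and m=m]
    have "x t k \<in> carrier_vec n" "(vnorm (x t k @\<^sub>v u t k))\<^sup>2 \<le> zb"
      using bound zeta0_eta0 x0 w_dim E_w E_wt dyn round tT l j t sigma_pos
      unfolding zb_def by (auto simp: kappa_def)
    moreover have "u t k \<in> carrier_vec (mS mi (S t))" using u_dim tT k by blast
    ultimately show ?thesis using z_def round(1) by (simp add: zr_def r)
  qed
  have zb: "0 \<le> zb" unfolding zb_def using L by simp
  have X: "(\<Sum>r\<in>R. (vnorm (zr r))\<^sup>2) * p \<le> N * T * zb"
  proof -
    have "(\<Sum>r\<in>R. (vnorm (zr r))\<^sup>2) \<le> real (card R) * zb"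
      using regressors by (intro sum_bounded_above) auto
    then have "(\<Sum>r\<in>R. (vnorm (zr r))\<^sup>2) * p \<le> real (card R) * zb * p"
      by (rule mult_right_mono) simp
    also have "\<dots> = real (card R * p) * zb" by simp
    also have "card R * p \<le> N * T"
      unfolding R_def using i j tau2_int by (intro card_estimation_rounds_le[OF Tij_def]) auto
    then have "real (card R * p) * zb \<le> real (N * T) * zb"
      using zb by (intro mult_right_mono) (simp_all only: of_nat_le_iff)
    finally show ?thesis by simp
  qed
  have V: "V j i = gram_mat (n + ?mj) lambda R zr"
    unfolding V_def[rule_format] gram_mat_def R_def zr_def
    by (simp add: sum.cartesian_product sum.Sigma split_def)
  have Theta: "Theta j \<in> carrier_mat n (n + ?mj)" "(fro (Theta j))\<^sup>2 \<le> 2 * real n * vartheta\<^sup>2"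
    unfolding Theta_def[rule_format] using A_dim BG opBG
    by (auto intro!: carrier_matI fro_power2_hcat_le simp: vartheta_def)
  have "?mj \<le> m" unfolding mS_def m_def using Gj by (intro sum_mono2) auto
  then show "opnorm (Thhat j i - Theta j) \<le> sqrt (eps0\<^sup>2 / i)"
    using regressors Thhat_min ass2 ass4_part N_ge delta i j
    by (intro estimation_error_bound[OF _ X lambda_pos sigma_pos _ _ _ N_ge _ _ _ _ zb eps0 Theta
          _ E_z[rule_format, OF i j, unfolded V] E_Theta[rule_format, OF i j, unfolded V] tau1_def])
      auto
qed

end
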